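(* Let $X$ be a real Banach space, $I=\{1,\ldots,m\}$, $J=\{1,\ldots,l\}$, $f_0,f_i,g_j\colon X\to\mathbb{R}$, and let $\overline{x}$ be a locally optimal solution of $$\min f_0(x)\quad\text{s.t.}\quad f_i(x)=0\ \forall i\in I,\quad g_j(x)\le0\ \forall j\in J.$$ Let $J(\overline{x})=\{j\in J\mid g_j(\overline{x})=0\}$ and suppose: (i) $f_0$ is quasidifferentiable and Hadamard directionally differentiable at $\overline{x}$; (ii) the functions $f_i$, $i\in I$, are continuous in a neighbourhood of $\overline{x}$ and quasidifferentiable at $\overline{x}$ uniformly along finite dimensional spaces; (iii) the functions $g_j$, $j\notin J(\overline{x})$, are upper semicontinuous and quasidifferentiable at $\overline{x}$, while $g_j$, $j\in J(\overline{x})$, are quasidifferentiable at $\overline{x}$ uniformly along finite dimensional spaces; (iv) vectors $x_i^*\in\underline{\partial} f_i(\overline{x})$, $y_i^*\in\overline{\partial} f_i(\overline{x})$, $i\in I$, and $z_j^*\in\overline{\partial} g_j(\overline{x})$, $j\in J(\overline{x})$, satisfy: (1) for any $i\in I$ there exists $v_i\in X$ with $s(\underline{\partial} f_i(\overline{x})+y_i^*,v_i)<0$ and, for all $k\ne i$, $s(\underline{\partial} f_k(\overline{x})+y_k^*,v_i)\le0$, $s(-x_k^*-\overline{\partial} f_k(\overline{x}),v_i)\le0$; (2) for any $i\in I$ there exists $w_i\in X$ with $s(-x_i^*-\overline{\partial} f_i(\overline{x}),w_i)<0$ and, for all $k\ne i$, $s(-x_k^*-\overline{\partial} f_k(\overline{x}),w_i)\le0$,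 $s(\underline{\partial} f_k(\overline{x})+y_k^*,w_i)\le0$; (3) there exists $v_0\in X$ with $s(\underline{\partial} g_j(\overline{x})+z_j^*,v_0)<0$ for all $j\in J(\overline{x})$ and $s(\underline{\partial} f_i(\overline{x})+y_i^*,v_0)\le0$, $s(-x_i^*-\overline{\partial} f_i(\overline{x}),v_0)\le0$ for all $i\in I$. Then for any $y_0^*\in\overline{\partial} f_0(\overline{x})$ and any $z_j^*\in\overline{\partial} g_j(\overline{x})$, $j\notin J(\overline{x})$, there exist $\lambda_j\ge0$, $j\in J$, such that $\lambda_jg_j(\overline{x})=0$ for all $j\in J$ and $$0\in\underline{\partial} f_0(\overline{x})+y_0^*+\sum_{j=1}^l\lambda_j\big(\underline{\partial} g_j(\overline{x})+z_j^*\big)+\operatorname{cl}^*\operatorname{cone}\{C_i\mid i\in I\},$$ where $C_i=(\underline{\partial} f_i(\overline{x})+y_i^* )\cup(-x_i^*-\overline{\partial} f_i(\overline{x}))$.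
   Context: $X^*$ is the dual with pairing $\langle\cdot,\cdot\rangle$; $\operatorname{cl}^*$ is weak$^*$ closure. $f$ is d.d. at $x$ if $f'(x,v)=\lim_{\alpha\to+0}(f(x+\alpha v)-f(x))/\alpha$ exists finitely for all $v$; Hadamard d.d. if $\lim_{[\alpha,v']\to[+0,v]}(f(x+\alpha v')-f(x))/\alpha$ exists finitely for all $v$; d.d. uniformly along finite dimensional spaces if for any $v$, finite dimensional subspace $X_0$ and $\varepsilon>0$ there is $\delta>0$ with $|(f(x+\alpha v')-f(x))/\alpha-f'(x,v)|<\varepsilon$ whenever $0<\alpha<\delta$, $v'\in v+X_0$, $\|v'-v\|<\delta$. $f$ is quasidifferentiable at $x$ if d.d. and there is a pair $[\underline{\partial} f(x),\overline{\partial} f(x)]$ of convex weak$^*$ compact subsets of $X^*$ with $f'(x,v)=\max_{x^*\in\underline{\partial} f(x)}\langle x^*,v\rangle+\min_{y^*\in\overline{\partial} f(x)}\langle y^*,v\rangle$ for all $v$ (uniformly along finite dimensional spaces if also d.d. in that uniform sense); a specific quasidifferential is fixed for each function. $s(C,v)=\sup_{x^*\in C}\langle x^*,v\rangle$. $\operatorname{cone}$ of a family of sets is the set of finite nonnegative linear combinations of elements of their union. Sums are Minkowski sums. *)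

theory Defs
  imports "HOL-Analysis.Analysis"
begin

text \<open>The dual space X* is modelled as the bounded linear functionals X \<Rightarrow>L real;
  the pairing is blinfun_apply.\<close>

definition weak_star :: "('a::real_normed_vector \<Rightarrow>\<^sub>L real) topology" where
  "weak_star = pullback_topology UNIV blinfun_apply (product_topology (\<lambda>_. euclideanreal) UNIV)"

definition wstar_closure :: "('a::real_normed_vector \<Rightarrow>\<^sub>L real) set \<Rightarrow> ('a \<Rightarrow>\<^sub>L real) set" where
  "wstar_closure S = weak_star closure_of S"

definition cone_fam :: "'b::real_vector set set \<Rightarrow> 'b set" where
  "cone_fam \<C> = {y. \<exists>F c. finite F \<and> F \<subseteq> \<Union>\<C> \<and> (\<forall>u\<in>F. c u \<ge> (0::real)) \<and> y = (\<Sum>u\<in>F. c u *\<^sub>R u)}"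

definition supp :: "('a::real_normed_vector \<Rightarrow>\<^sub>L real) set \<Rightarrow> 'a \<Rightarrow> real" where
  "supp C v = Sup ((\<lambda>x. blinfun_apply x v) ` C)"

definition dir_diff :: "('a::real_normed_vector \<Rightarrow> real) \<Rightarrow> 'a \<Rightarrow> bool" where
  "dir_diff f x \<longleftrightarrow> (\<forall>v. \<exists>L. ((\<lambda>t. (f (x + t *\<^sub>R v) - f x) / t) \<longlongrightarrow> L) (at_right 0))"

definition dir_deriv :: "('a::real_normed_vector \<Rightarrow> real) \<Rightarrow> 'a \<Rightarrow> 'a \<Rightarrow> real" where
  "dir_deriv f x v = Lim (at_right 0) (\<lambda>t. (f (x + t *\<^sub>R v) - f x) / t)"

definition hadamard_dir_diff :: "('a::real_normed_vector \<Rightarrow> real) \<Rightarrow> 'a \<Rightarrow> bool" where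
  "hadamard_dir_diff f x \<longleftrightarrow> (\<forall>v. \<exists>L.
     ((\<lambda>(t, w). (f (x + t *\<^sub>R w) - f x) / t) \<longlongrightarrow> L) (at (0, v) within ({0<..} \<times> UNIV)))"

text \<open>d.d. uniformly along finite dimensional spaces; finite dimensional subspaces are
  exactly the spans of finite sets.\<close>
definition unif_dir_diff :: "('a::real_normed_vector \<Rightarrow> real) \<Rightarrow> 'a \<Rightarrow> bool" where
  "unif_dir_diff f x \<longleftrightarrow> dir_diff f x \<and>
     (\<forall>v B \<epsilon>. finite B \<and> \<epsilon> > 0 \<longrightarrow> (\<exists>\<delta>>0. \<forall>t w. 0 < t \<and> t < \<delta> \<and> w - v \<in> span B \<and> norm (w - v) < \<delta>
        \<longrightarrow> \<bar>(f (x + t *\<^sub>R w) - f x) / t - dir_deriv f x v\<bar> < \<epsilon>))"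

definition quasidiff :: "('a::real_normed_vector \<Rightarrow> real) \<Rightarrow> 'a \<Rightarrow> ('a \<Rightarrow>\<^sub>L real) set \<Rightarrow> ('a \<Rightarrow>\<^sub>L real) set \<Rightarrow> bool" where
  "quasidiff f x L U \<longleftrightarrow> dir_diff f x \<and> convex L \<and> convex U \<and> L \<noteq> {} \<and> U \<noteq> {} \<and>
     compactin weak_star L \<and> compactin weak_star U \<and>
     (\<forall>v. dir_deriv f x v = Sup ((\<lambda>a. blinfun_apply a v) ` L) + Inf ((\<lambda>b. blinfun_apply b v) ` U))"

definition unif_quasidiff :: "('a::real_normed_vector \<Rightarrow> real) \<Rightarrow> 'a \<Rightarrow> ('a \<Rightarrow>\<^sub>L real) set \<Rightarrow> ('a \<Rightarrow>\<^sub>L real) set \<Rightarrow> bool" where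
  "unif_quasidiff f x L U \<longleftrightarrow> quasidiff f x L U \<and> unif_dir_diff f x"

definition usc_at :: "('a::topological_space \<Rightarrow> real) \<Rightarrow> 'a \<Rightarrow> bool" where
  "usc_at f x \<longleftrightarrow> (\<forall>e>0. eventually (\<lambda>y. f y < f x + e) (at x))"

definition loc_opt :: "('a::real_normed_vector \<Rightarrow> real) \<Rightarrow> (nat \<Rightarrow> 'a \<Rightarrow> real) \<Rightarrow> nat \<Rightarrow> (nat \<Rightarrow> 'a \<Rightarrow> real) \<Rightarrow> nat \<Rightarrow> 'a \<Rightarrow> bool" where
  "loc_opt f0 f m g l xb \<longleftrightarrow>
     (\<forall>i\<in>{1..m}. f i xb = 0) \<and> (\<forall>j\<in>{1..l}. g j xb \<le> 0) \<and>
     (\<exists>r>0. \<forall>x. dist x xb < r \<and> (\<forall>i\<in>{1..m}. f i x = 0) \<and> (\<forall>j\<in>{1..l}. g j x \<le> 0) \<longrightarrow> f0 xb \<le> f0 x)"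

end

theory Submission
  imports Defs "HOL-Homology.Brouwer_Degree"
begin

text \<open>Quasidifferentiability bounds every directional derivative by support functions: with
  \<open>P\<^sub>0\<close> the lower quasidifferential of \<open>f\<^sub>0\<close> shifted by \<open>y\<^sub>0\<^sup>*\<close> and \<open>P\<^sub>j\<close> likewise for the active
  \<open>g\<^sub>j\<close>, one has \<open>f\<^sub>0'(x;d) \<le> s(P\<^sub>0,d)\<close>, \<open>g\<^sub>j'(x;d) \<le> s(P\<^sub>j,d)\<close> and
  \<open>-s(C\<^sub>i\<^sup>-,d) \<le> f\<^sub>i'(x;d) \<le> s(C\<^sub>i\<^sup>+,d)\<close>, where \<open>C\<^sub>i = C\<^sub>i\<^sup>+ \<union> C\<^sub>i\<^sup>-\<close>.  Local optimality rules out a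
  direction \<open>u\<close> with \<open>s(P\<^sub>0,u) < 0\<close>, \<open>s(P\<^sub>j,u) < 0\<close> and \<open>s(C\<^sub>i\<^sup>\<plusminus>,u) \<le> 0\<close>: perturbing \<open>u\<close> by
  \<open>\<epsilon> \<Sum>\<^sub>k (s\<^sub>k\<^sup>+ w\<^sub>k + s\<^sub>k\<^sup>- v\<^sub>k)\<close> with \<open>s\<close> in the unit ball of \<open>\<real>\<^sup>m\<close> and \<open>v\<^sub>k, w\<^sub>k\<close> from (iv)(1),(2),
  the acute angle lemma (a consequence of the non-contractibility of spheres) solves the equality
  constraints along the perturbed rays, and Hadamard differentiability makes \<open>f\<^sub>0\<close> decrease there.
  A theorem of the alternative in the weak* topology, reduced by compactness to a separation in
  finitely many coordinates, then puts \<open>0\<close> into the convex hull of \<open>P\<^sub>0\<close> and the \<open>P\<^sub>j\<close> plus the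
  weak* closed cone generated by the \<open>C\<^sub>i\<close>, and (iv)(3) makes the weight of \<open>P\<^sub>0\<close> positive.\<close>

text \<open>Points of \<open>\<real>\<^sup>m\<close> are functions \<open>nat \<Rightarrow> real\<close> vanishing from \<open>m\<close> on, the model used by
  \<open>nsphere\<close>.\<close>

definition sqnorm_upto :: "nat \<Rightarrow> (nat \<Rightarrow> real) \<Rightarrow> real" where
  "sqnorm_upto m y = (\<Sum>i<m. (y i)\<^sup>2)"

definition ball_upto :: "nat \<Rightarrow> (nat \<Rightarrow> real) set" where
  "ball_upto m = {s. sqnorm_upto m s \<le> 1 \<and> (\<forall>i\<ge>m. s i = 0)}"

definition sphere_upto :: "nat \<Rightarrow> (nat \<Rightarrow> real) set" where
  "sphere_upto m = {s. sqnorm_upto m s = 1 \<and> (\<forall>i\<ge>m. s i = 0)}"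

definition unit_dir :: "nat \<Rightarrow> (nat \<Rightarrow> real) \<Rightarrow> nat \<Rightarrow> real" where
  "unit_dir m y = (\<lambda>i. y i / sqrt (sqnorm_upto m y))"

lemma nsphere_eq_sphere_upto: "nsphere n = top_of_set (sphere_upto (Suc n))"
  unfolding nsphere euclidean_product_topology sphere_upto_def sqnorm_upto_def
  by (metis (no_types, lifting) Suc_le_eq lessThan_Suc_atMost)

lemma sphere_upto_subset_ball_upto: "sphere_upto m \<subseteq> ball_upto m"
  by (auto simp: sphere_upto_def ball_upto_def)

lemma sqnorm_upto_nonneg: "sqnorm_upto m y \<ge> 0"
  unfolding sqnorm_upto_def by (simp add: sum_nonneg)

lemma square_le_sqnorm_upto: "k < m \<Longrightarrow> (y k)\<^sup>2 \<le> sqnorm_upto m y"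
  unfolding sqnorm_upto_def by (rule member_le_sum) auto

lemma abs_le_one_if_in_ball_upto: "s \<in> ball_upto m \<Longrightarrow> k < m \<Longrightarrow> \<bar>s k\<bar> \<le> 1"
  using square_le_sqnorm_upto[of k m s] by (simp add: ball_upto_def abs_square_le_1[symmetric])

lemma sqnorm_upto_pos_if_inner_pos:
  assumes "(\<Sum>i<m. x i * y i) > 0"
  shows "sqnorm_upto m y > 0"
proof (rule ccontr)
  assume "\<not> sqnorm_upto m y > 0"
  then have "\<forall>i\<in>{..<m}. (y i)\<^sup>2 = 0"
    using sqnorm_upto_nonneg[of m y] by (simp add: sqnorm_upto_def sum_nonneg_eq_0_iff)
  with assms show False by simp
qed

lemma continuous_on_sqnorm_upto:
  "continuous_on S g \<Longrightarrow> continuous_on S (\<lambda>z. sqnorm_upto m (g z))"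
  unfolding sqnorm_upto_def
  by (intro continuous_on_sum continuous_on_power) (rule continuous_on_product_then_coordinatewise)

lemma continuous_on_unit_dir:
  assumes "continuous_on S g" "\<And>z. z \<in> S \<Longrightarrow> sqnorm_upto m (g z) > 0"
  shows "continuous_on S (\<lambda>z. unit_dir m (g z))"
  unfolding unit_dir_def
proof (intro continuous_on_coordinatewise_then_product continuous_on_divide ballI)
  show "continuous_on S (\<lambda>z. g z i)" for i
    using assms(1) by (rule continuous_on_product_then_coordinatewise)
  show "continuous_on S (\<lambda>z. sqrt (sqnorm_upto m (g z)))"
    by (intro continuous_intros continuous_on_sqnorm_upto assms(1))
  show "sqrt (sqnorm_upto m (g z)) \<noteq> 0" if "z \<in> S" for z
    using assms(2)[OF that] by simp
qed

lemma unit_dir_in_sphere_upto: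
  assumes "sqnorm_upto m y > 0" "\<forall>i\<ge>m. y i = 0"
  shows "unit_dir m y \<in> sphere_upto m"
proof -
  have "sqnorm_upto m (unit_dir m y) = (\<Sum>i<m. (y i)\<^sup>2 / sqnorm_upto m y)"
    unfolding unit_dir_def sqnorm_upto_def[of m "\<lambda>i. y i / sqrt (sqnorm_upto m y)"]
    using assms(1) by (simp add: power_divide)
  also have "\<dots> = 1"
    using assms(1) by (simp only: sum_divide_distrib[symmetric] sqnorm_upto_def) simp
  finally show ?thesis
    using assms(2) by (simp add: sphere_upto_def unit_dir_def)
qed

lemma unit_dir_id: "x \<in> sphere_upto m \<Longrightarrow> unit_dir m x = x"
  by (simp add: sphere_upto_def unit_dir_def)

lemma homotopic_with_unit_dir:
  fixes H :: "real \<times> 'a::topological_space \<Rightarrow> nat \<Rightarrow> real"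
  assumes cont: "continuous_on ({0..1} \<times> S) H"
    and nz: "\<And>t x. t \<in> {0..1} \<Longrightarrow> x \<in> S \<Longrightarrow> sqnorm_upto m (H (t, x)) > 0 \<and> (\<forall>i\<ge>m. H (t, x) i = 0)"
  shows "homotopic_with (\<lambda>_. True) (top_of_set S) (top_of_set (sphere_upto m))
           (\<lambda>x. unit_dir m (H (0, x))) (\<lambda>x. unit_dir m (H (1, x)))"
  unfolding homotopic_with_def
proof (intro exI conjI)
  show "continuous_map (prod_topology (top_of_set {0..1}) (top_of_set S)) (top_of_set (sphere_upto m))
          (\<lambda>p. unit_dir m (H p))"
    unfolding prod_topology_subtopology_eu continuous_map_subtopology_eu
  proof
    show "continuous_on ({0..1} \<times> S) (\<lambda>p. unit_dir m (H p))"
      using nz by (intro continuous_on_unit_dir[OF cont]) auto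
    show "(\<lambda>p. unit_dir m (H p)) \<in> {0..1} \<times> S \<rightarrow> sphere_upto m"
      using nz by (auto intro: unit_dir_in_sphere_upto)
  qed
qed auto

lemma compact_ball_upto: "compact (ball_upto m)"
proof -
  define box where "box = PiE UNIV (\<lambda>k::nat. if k < m then {-1..1::real} else {0})"
  have "compactin (product_topology (\<lambda>_. euclideanreal) UNIV) box"
    unfolding box_def compactin_PiE by auto
  then have "compact box"
    by (simp add: euclidean_product_topology)
  moreover have "closed (ball_upto m)"
  proof -
    have "ball_upto m = {s. sqnorm_upto m s \<le> 1} \<inter> (\<Inter>i\<in>{m..}. {s. s i = 0})"
      by (auto simp: ball_upto_def)
    then show ?thesis
      by (simp add: closed_Int closed_INT closed_Collect_le closed_Collect_eq continuous_on_const
          continuous_on_product_coordinates continuous_on_sqnorm_upto[OF continuous_on_id])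
  qed
  moreover have "ball_upto m \<subseteq> box"
    using abs_le_one_if_in_ball_upto
    by (fastforce simp: box_def ball_upto_def PiE_def extensional_def abs_le_iff)
  ultimately show ?thesis
    by (metis compact_Int_closed inf.absorb_iff2)
qed

lemma scaled_sphere_in_ball_upto:
  assumes "t \<in> {0..1}" "x \<in> sphere_upto m"
  shows "(\<lambda>i. (1 - t) * x i) \<in> ball_upto m"
proof -
  have "sqnorm_upto m (\<lambda>i. (1 - t) * x i) = (1 - t)\<^sup>2"
    using assms(2) by (simp add: sqnorm_upto_def sphere_upto_def power_mult_distrib flip: sum_distrib_left)
  also have "\<dots> \<le> 1"
    using assms(1) by (simp add: power_le_one)
  finally show ?thesis
    using assms(2) by (simp add: ball_upto_def sphere_upto_def)
qed

lemma cont_snd_sphere_upto: "continuous_on ({0..1::real} \<times> sphere_upto m) (\<lambda>p. snd p i)"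
  by (rule continuous_on_product_then_coordinatewise[OF continuous_on_snd[OF continuous_on_id]])

lemma homotopic_id_unit_dir_if_outward:
  assumes cont: "continuous_on (sphere_upto m) G"
    and outward: "\<And>x. x \<in> sphere_upto m \<Longrightarrow> (\<Sum>i<m. x i * G x i) > 0"
    and zero: "\<And>x i. x \<in> sphere_upto m \<Longrightarrow> m \<le> i \<Longrightarrow> G x i = 0"
  shows "homotopic_with (\<lambda>_. True) (top_of_set (sphere_upto m)) (top_of_set (sphere_upto m))
    id (\<lambda>x. unit_dir m (G x))"
proof (rule homotopic_with_eq[OF homotopic_with_unit_dir
      [where H = "\<lambda>p i. (1 - fst p) * snd p i + fst p * G (snd p) i"]])
  have cont_G: "continuous_on ({0..1} \<times> sphere_upto m) (\<lambda>p. G (snd p))"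
    by (rule continuous_on_compose2[OF cont continuous_on_snd[OF continuous_on_id]]) auto
  show "continuous_on ({0..1} \<times> sphere_upto m) (\<lambda>p i. (1 - fst p) * snd p i + fst p * G (snd p) i)"
    by (intro continuous_on_coordinatewise_then_product continuous_intros cont_snd_sphere_upto
        continuous_on_product_then_coordinatewise[OF cont_G])
  fix t :: real and x
  assume t: "t \<in> {0..1}" and x: "x \<in> sphere_upto m"
  have "(\<Sum>i<m. x i * ((1 - t) * x i + t * G x i)) = (\<Sum>i<m. (1 - t) * (x i)\<^sup>2 + t * (x i * G x i))"
    by (rule sum.cong) (auto simp: algebra_simps power2_eq_square)
  also have "\<dots> = (1 - t) * sqnorm_upto m x + t * (\<Sum>i<m. x i * G x i)"
    by (simp add: sqnorm_upto_def sum.distrib sum_distrib_left)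
  also have "\<dots> > 0"
    using t x outward[OF x] by (cases "t = 0") (auto simp: sphere_upto_def intro: add_nonneg_pos)
  finally have "sqnorm_upto m (\<lambda>i. (1 - t) * x i + t * G x i) > 0"
    by (rule sqnorm_upto_pos_if_inner_pos)
  then show "sqnorm_upto m ((\<lambda>p i. (1 - fst p) * snd p i + fst p * G (snd p) i) (t, x)) > 0 \<and>
      (\<forall>i\<ge>m. (\<lambda>p i. (1 - fst p) * snd p i + fst p * G (snd p) i) (t, x) i = 0)"
    using x zero by (simp add: sphere_upto_def)
qed (auto simp: unit_dir_id)

lemma homotopic_unit_dir_const:
  assumes cont: "continuous_on (ball_upto m) G"
    and nz: "\<And>s. s \<in> ball_upto m \<Longrightarrow> sqnorm_upto m (G s) > 0 \<and> (\<forall>i\<ge>m. G s i = 0)"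
  shows "homotopic_with (\<lambda>_. True) (top_of_set (sphere_upto m)) (top_of_set (sphere_upto m))
    (\<lambda>x. unit_dir m (G x)) (\<lambda>x. unit_dir m (G (\<lambda>i. 0)))"
proof (rule homotopic_with_eq[OF homotopic_with_unit_dir[where H = "\<lambda>p. G (\<lambda>i. (1 - fst p) * snd p i)"]])
  have "continuous_on ({0..1} \<times> sphere_upto m) (\<lambda>p i. (1 - fst p) * snd p i)"
    by (intro continuous_on_coordinatewise_then_product continuous_intros cont_snd_sphere_upto)
  then show "continuous_on ({0..1} \<times> sphere_upto m) (\<lambda>p. G (\<lambda>i. (1 - fst p) * snd p i))"
    by (rule continuous_on_compose2[OF cont]) (auto intro: scaled_sphere_in_ball_upto)
qed (use nz scaled_sphere_in_ball_upto in auto)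

text \<open>A field without zeros would have a normalisation homotopic both to
  the identity of the sphere (straight line, using the outward condition) and to a constant
  (shrink the argument), so the sphere would be contractible.\<close>

lemma outward_field_has_zero:
  assumes cont: "continuous_on (ball_upto m) F"
    and outward: "\<And>s. s \<in> sphere_upto m \<Longrightarrow> (\<Sum>i<m. s i * F s i) > 0"
  shows "\<exists>s\<in>ball_upto m. \<forall>i<m. F s i = 0"
proof (rule ccontr)
  assume no_zero: "\<not> ?thesis"
  obtain n where m: "m = Suc n"
  proof (cases m)
    case 0
    then have "(\<lambda>_. 0) \<in> ball_upto m"
      by (simp add: ball_upto_def sqnorm_upto_def)
    with no_zero 0 show ?thesis
      by auto
  qed
  define G where "G s = (\<lambda>i. if i < m then F s i else 0)" for s
  have G_nz: "sqnorm_upto m (G s) > 0 \<and> (\<forall>i\<ge>m. G s i = 0)" if "s \<in> ball_upto m" for s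
  proof -
    have "\<not> (\<forall>i<m. F s i = 0)"
      using no_zero that by blast
    then obtain i where i: "i < m" "F s i \<noteq> 0"
      by blast
    then have "0 < (G s i)\<^sup>2"
      by (simp add: G_def)
    also have "\<dots> \<le> sqnorm_upto m (G s)"
      using i(1) by (rule square_le_sqnorm_upto)
    finally show ?thesis
      by (simp add: G_def)
  qed
  have contG: "continuous_on (ball_upto m) G"
    unfolding G_def
  proof (intro continuous_on_coordinatewise_then_product)
    show "continuous_on (ball_upto m) (\<lambda>s. if i < m then F s i else 0)" for i
      using continuous_on_product_then_coordinatewise[OF cont, of i] by (cases "i < m") auto
  qed
  have "homotopic_with (\<lambda>_. True) (top_of_set (sphere_upto m)) (top_of_set (sphere_upto m)) id (\<lambda>x. unit_dir m (G x))"
    using sphere_upto_subset_ball_upto outward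
    by (intro homotopic_id_unit_dir_if_outward continuous_on_subset[OF contG]) (auto simp: G_def)
  then have "contractible_space (top_of_set (sphere_upto m))"
    unfolding contractible_space_def using homotopic_with_trans homotopic_unit_dir_const[OF contG G_nz] by blast
  then show False
    using non_contractible_space_nsphere[of n] by (simp add: nsphere_eq_sphere_upto m)
qed

lemma weak_star_eq_strong_operator_topology: "weak_star = strong_operator_topology"
  by (simp add: weak_star_def strong_operator_topology_def euclidean_product_topology)

lemma topspace_weak_star [simp]: "topspace weak_star = UNIV"
  by (simp add: weak_star_eq_strong_operator_topology strong_operator_topology_topspace)

lemma continuous_map_weak_star_eval: "continuous_map weak_star euclideanreal (\<lambda>a. blinfun_apply a v)"
  by (simp add: weak_star_eq_strong_operator_topology strong_operator_topology_continuous_evaluation)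

lemma continuous_map_into_weak_star_iff:
  "continuous_map X weak_star h \<longleftrightarrow> (\<forall>v. continuous_map X euclideanreal (\<lambda>x. blinfun_apply (h x) v))"
  by (simp add: weak_star_eq_strong_operator_topology continuous_on_strong_operator_topo_iff_coordinatewise)

definition wstar_nbhd :: "'a::real_normed_vector set \<Rightarrow> real \<Rightarrow> ('a \<Rightarrow>\<^sub>L real) \<Rightarrow> ('a \<Rightarrow>\<^sub>L real) set" where
  "wstar_nbhd V e x = {y. \<forall>v\<in>V. \<bar>blinfun_apply y v - blinfun_apply x v\<bar> < e}"

lemma openin_wstar_nbhd: "finite V \<Longrightarrow> openin weak_star (wstar_nbhd V e x)"
  using strong_operator_topology_basis[of V "\<lambda>v. ball (blinfun_apply x v) e" id]
  by (simp add: weak_star_eq_strong_operator_topology wstar_nbhd_def dist_real_def abs_minus_commute)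

lemma centre_in_wstar_nbhd: "e > 0 \<Longrightarrow> x \<in> wstar_nbhd V e x"
  by (simp add: wstar_nbhd_def)

lemma wstar_nbhd_subset_open:
  assumes "openin weak_star U" "x \<in> U"
  obtains V e where "finite V" "e > 0" "wstar_nbhd V e x \<subseteq> U"
proof -
  obtain W where W: "openin (product_topology (\<lambda>_. euclideanreal) UNIV) W" "U = blinfun_apply -` W"
    using assms(1) unfolding weak_star_def openin_pullback_topology by auto
  moreover have "blinfun_apply x \<in> W"
    using assms(2) W(2) by auto
  ultimately obtain X where X: "blinfun_apply x \<in> (\<Pi>\<^sub>E v\<in>UNIV. X v)" "\<forall>v. openin euclideanreal (X v)"
      "finite {v. X v \<noteq> topspace euclideanreal}" "(\<Pi>\<^sub>E v\<in>UNIV. X v) \<subseteq> W"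
    using product_topology_open_contains_basis[OF W(1)] by blast
  define V where "V = {v. X v \<noteq> UNIV}"
  have "\<forall>v\<in>V. \<exists>e>0. ball (blinfun_apply x v) e \<subseteq> X v"
    using X(1,2) by (auto simp: open_contains_ball)
  then obtain ee where ee: "\<And>v. v \<in> V \<Longrightarrow> ee v > 0 \<and> ball (blinfun_apply x v) (ee v) \<subseteq> X v"
    by metis
  define e where "e = Min (insert 1 (ee ` V))"
  have "finite V"
    using X(3) by (simp add: V_def)
  then have e: "e > 0" "\<And>v. v \<in> V \<Longrightarrow> e \<le> ee v"
    using ee by (auto simp: e_def Min_gr_iff)
  have "blinfun_apply y v \<in> X v" if "y \<in> wstar_nbhd V e x" for y v
  proof (cases "v \<in> V")
    case True
    then have "blinfun_apply y v \<in> ball (blinfun_apply x v) (ee v)"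
      using that e(2)[OF True] by (auto simp: wstar_nbhd_def dist_real_def abs_minus_commute)
    then show ?thesis
      using ee[OF True] by blast
  qed (simp add: V_def)
  then have "wstar_nbhd V e x \<subseteq> U"
    using X(4) W(2) by fastforce
  with \<open>finite V\<close> e(1) show ?thesis
    by (rule that)
qed

lemma in_wstar_closure_iff:
  "x \<in> wstar_closure S \<longleftrightarrow> (\<forall>V e. finite V \<longrightarrow> e > 0 \<longrightarrow> (\<exists>s\<in>S. s \<in> wstar_nbhd V e x))"
proof
  assume "x \<in> wstar_closure S"
  then show "\<forall>V e. finite V \<longrightarrow> e > 0 \<longrightarrow> (\<exists>s\<in>S. s \<in> wstar_nbhd V e x)"
    unfolding wstar_closure_def in_closure_of by (meson openin_wstar_nbhd centre_in_wstar_nbhd)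
next
  assume "\<forall>V e. finite V \<longrightarrow> e > 0 \<longrightarrow> (\<exists>s\<in>S. s \<in> wstar_nbhd V e x)"
  then show "x \<in> wstar_closure S"
    unfolding wstar_closure_def in_closure_of by (metis topspace_weak_star UNIV_I wstar_nbhd_subset_open subsetD)
qed

lemma subset_wstar_closure: "S \<subseteq> wstar_closure S"
  unfolding wstar_closure_def by (rule closure_of_subset) simp

lemma wstar_closure_add:
  fixes K :: "('a::real_normed_vector \<Rightarrow>\<^sub>L real) set"
  assumes add: "\<And>a b. a \<in> K \<Longrightarrow> b \<in> K \<Longrightarrow> a + b \<in> K"
    and a: "a \<in> wstar_closure K" and b: "b \<in> wstar_closure K"
  shows "a + b \<in> wstar_closure K"
  unfolding in_wstar_closure_iff
proof (intro allI impI)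
  fix V :: "'a set" and e :: real
  assume V: "finite V" "e > 0"
  obtain a' where a': "a' \<in> K" "a' \<in> wstar_nbhd V (e/2) a"
    using a V unfolding in_wstar_closure_iff by (meson half_gt_zero)
  obtain b' where b': "b' \<in> K" "b' \<in> wstar_nbhd V (e/2) b"
    using b V unfolding in_wstar_closure_iff by (meson half_gt_zero)
  have "\<bar>blinfun_apply (a' + b') v - blinfun_apply (a + b) v\<bar> < e" if "v \<in> V" for v
  proof -
    have "\<bar>blinfun_apply a' v - blinfun_apply a v\<bar> < e/2" "\<bar>blinfun_apply b' v - blinfun_apply b v\<bar> < e/2"
      using a'(2) b'(2) that by (auto simp: wstar_nbhd_def)
    then show ?thesis
      unfolding blinfun.add_left abs_less_iff by linarith
  qed
  then have "a' + b' \<in> wstar_nbhd V e (a + b)"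
    by (simp add: wstar_nbhd_def)
  then show "\<exists>s\<in>K. s \<in> wstar_nbhd V e (a + b)"
    using add a'(1) b'(1) by blast
qed

lemma wstar_closure_scaleR:
  fixes K :: "('a::real_normed_vector \<Rightarrow>\<^sub>L real) set"
  assumes zero: "0 \<in> K" and scale: "\<And>c a. c \<ge> 0 \<Longrightarrow> a \<in> K \<Longrightarrow> c *\<^sub>R a \<in> K"
    and a: "a \<in> wstar_closure K" and c: "c \<ge> 0"
  shows "c *\<^sub>R a \<in> wstar_closure K"
proof (cases "c = 0")
  case True
  then show ?thesis
    using zero subset_wstar_closure by auto
next
  case False
  with c have c: "c > 0"
    by simp
  show ?thesis
    unfolding in_wstar_closure_iff
  proof (intro allI impI)
    fix V :: "'a set" and e :: real
    assume V: "finite V" "e > 0"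
    obtain a' where a': "a' \<in> K" "a' \<in> wstar_nbhd V (e / c) a"
      using a V c unfolding in_wstar_closure_iff by (meson divide_pos_pos)
    have "c * \<bar>blinfun_apply a' v - blinfun_apply a v\<bar> < e" if "v \<in> V" for v
      using a'(2) that c by (auto simp: wstar_nbhd_def field_simps)
    then have "c *\<^sub>R a' \<in> wstar_nbhd V e (c *\<^sub>R a)"
      using c by (simp add: wstar_nbhd_def blinfun.scaleR_left abs_mult flip: right_diff_distrib)
    then show "\<exists>s\<in>K. s \<in> wstar_nbhd V e (c *\<^sub>R a)"
      using scale c a'(1) by force
  qed
qed

lemma wstar_closure_halfspace:
  assumes "\<And>k. k \<in> K \<Longrightarrow> blinfun_apply k v \<le> 0" and "a \<in> wstar_closure K"
  shows "blinfun_apply a v \<le> 0"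
proof (rule ccontr)
  assume "\<not> ?thesis"
  then obtain k where "k \<in> K" "k \<in> wstar_nbhd {v} (blinfun_apply a v) a"
    using assms(2) unfolding in_wstar_closure_iff by (meson finite.emptyI finite_insert not_le)
  then show False
    using assms(1)[of k] by (auto simp: wstar_nbhd_def)
qed

lemma bounded_eval_if_compactin_weak_star:
  assumes "compactin weak_star K"
  shows "bounded ((\<lambda>a. blinfun_apply a v) ` K)"
  using image_compactin[OF assms continuous_map_weak_star_eval] by (simp add: compact_imp_bounded)

lemma compactin_weak_star_translation:
  "compactin weak_star L \<Longrightarrow> compactin weak_star ((\<lambda>a. a + y) ` L)"
  by (erule image_compactin)
    (simp add: continuous_map_into_weak_star_iff blinfun.add_left continuous_map_add
      continuous_map_weak_star_eval)

lemma compactin_weak_star_convex_hull_Union: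
  fixes P :: "'i \<Rightarrow> ('a::real_normed_vector \<Rightarrow>\<^sub>L real) set"
  assumes J: "finite J" and P: "\<And>j. j \<in> J \<Longrightarrow> convex (P j) \<and> P j \<noteq> {} \<and> compactin weak_star (P j)"
  shows "compactin weak_star (convex hull (\<Union>(P ` J)))"
proof -
  define X where "X = product_topology (\<lambda>j. prod_topology euclideanreal (weak_star :: ('a \<Rightarrow>\<^sub>L real) topology)) J"
  define S where "S = {\<theta> \<in> topspace X. (\<Sum>j\<in>J. fst (\<theta> j)) \<in> {1}} \<inter> (\<Pi>\<^sub>E j\<in>J. {0..1} \<times> P j)"
  define \<Phi> where "\<Phi> \<theta> = (\<Sum>j\<in>J. fst (\<theta> j) *\<^sub>R snd (\<theta> j))" for \<theta> :: "'i \<Rightarrow> real \<times> ('a \<Rightarrow>\<^sub>L real)"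
  have fst: "continuous_map X euclideanreal (\<lambda>\<theta>. fst (\<theta> j))" if "j \<in> J" for j
    using continuous_map_compose[OF continuous_map_product_projection[OF that] continuous_map_fst]
    by (simp add: X_def o_def)
  have snd: "continuous_map X weak_star (\<lambda>\<theta>. snd (\<theta> j))" if "j \<in> J" for j
    using continuous_map_compose[OF continuous_map_product_projection[OF that] continuous_map_snd]
    by (simp add: X_def o_def)
  have "compactin X (\<Pi>\<^sub>E j\<in>J. {0..1} \<times> P j)"
    unfolding X_def compactin_PiE compactin_Times using P by auto
  moreover have "continuous_map X euclideanreal (\<lambda>\<theta>. \<Sum>j\<in>J. fst (\<theta> j))"
    by (rule continuous_map_sum) (use J fst in auto)
  then have "closedin X {\<theta> \<in> topspace X. (\<Sum>j\<in>J. fst (\<theta> j)) \<in> {1}}"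
    by (rule closedin_continuous_map_preimage) simp
  ultimately have "compactin X S"
    unfolding S_def by (rule closed_Int_compactin[rotated])
  moreover have "continuous_map X euclideanreal (\<lambda>\<theta>. fst (\<theta> j) * blinfun_apply (snd (\<theta> j)) v)"
    if "j \<in> J" for j v
    using continuous_map_compose[OF snd[OF that] continuous_map_weak_star_eval]
    by (intro continuous_map_real_mult fst[OF that]) (simp add: o_def)
  then have "continuous_map X weak_star \<Phi>"
    unfolding continuous_map_into_weak_star_iff \<Phi>_def blinfun.sum_left blinfun.scaleR_left
    using J by (intro allI continuous_map_sum) auto
  ultimately have "compactin weak_star (\<Phi> ` S)"
    by (rule image_compactin)
  moreover have "convex hull (\<Union>(P ` J)) =
      {\<Sum>j\<in>J. c j *\<^sub>R p j | c p. (\<forall>j\<in>J. c j \<ge> 0) \<and> sum c J = 1 \<and> (\<forall>j\<in>J. p j \<in> P j)}"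
    using P by (intro convex_hull_finite_union[OF J]) auto
  moreover have "\<Phi> ` S =
      {\<Sum>j\<in>J. c j *\<^sub>R p j | c p. (\<forall>j\<in>J. c j \<ge> 0) \<and> sum c J = 1 \<and> (\<forall>j\<in>J. p j \<in> P j)}"
  proof (intro equalityI subsetI)
    fix e assume "e \<in> \<Phi> ` S"
    then obtain \<theta> where "(\<Sum>j\<in>J. fst (\<theta> j)) = 1" "\<theta> \<in> (\<Pi>\<^sub>E j\<in>J. {0..1} \<times> P j)" "e = \<Phi> \<theta>"
      by (auto simp: S_def)
    then show "e \<in> {\<Sum>j\<in>J. c j *\<^sub>R p j | c p. (\<forall>j\<in>J. c j \<ge> 0) \<and> sum c J = 1 \<and> (\<forall>j\<in>J. p j \<in> P j)}"
      unfolding \<Phi>_def by (force simp: PiE_iff)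
  next
    fix e assume "e \<in> {\<Sum>j\<in>J. c j *\<^sub>R p j | c p. (\<forall>j\<in>J. c j \<ge> 0) \<and> sum c J = 1 \<and> (\<forall>j\<in>J. p j \<in> P j)}"
    then obtain c p where cp: "e = (\<Sum>j\<in>J. c j *\<^sub>R p j)" "\<forall>j\<in>J. c j \<ge> 0" "sum c J = 1" "\<forall>j\<in>J. p j \<in> P j"
      by blast
    have "c j \<le> 1" if "j \<in> J" for j
      using member_le_sum[of j J c] cp(2,3) J that by simp
    then have "restrict (\<lambda>j. (c j, p j)) J \<in> S"
      using cp P by (auto simp: S_def X_def dest: compactin_subset_topspace)
    moreover have "\<Phi> (restrict (\<lambda>j. (c j, p j)) J) = e"
      using cp by (simp add: \<Phi>_def)
    ultimately show "e \<in> \<Phi> ` S"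
      by force
  qed
  ultimately show ?thesis
    by simp
qed

lemma wstar_closure_gap:
  fixes x :: "'a::real_normed_vector \<Rightarrow>\<^sub>L real"
  assumes "x \<notin> wstar_closure K"
  obtains V \<epsilon> where "finite V" "\<epsilon> > 0"
    "\<And>a. a \<in> wstar_closure K \<Longrightarrow> \<exists>v\<in>V. \<epsilon> \<le> \<bar>blinfun_apply a v - blinfun_apply x v\<bar>"
proof -
  obtain V and \<epsilon> :: real where V: "finite V" "\<epsilon> > 0" and miss: "\<And>s. s \<in> K \<Longrightarrow> s \<notin> wstar_nbhd V \<epsilon> x"
    using assms unfolding in_wstar_closure_iff by blast
  have "\<exists>v\<in>V. \<epsilon>/2 \<le> \<bar>blinfun_apply a v - blinfun_apply x v\<bar>" if a: "a \<in> wstar_closure K" for a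
  proof (rule ccontr)
    assume "\<not> ?thesis"
    then have near: "\<forall>v\<in>V. \<bar>blinfun_apply a v - blinfun_apply x v\<bar> < \<epsilon>/2"
      by force
    obtain s where s: "s \<in> K" "s \<in> wstar_nbhd V (\<epsilon>/2) a"
      using a V unfolding in_wstar_closure_iff by (meson half_gt_zero)
    have "\<bar>blinfun_apply s v - blinfun_apply x v\<bar> < \<epsilon>" if "v \<in> V" for v
      using near s(2) that unfolding wstar_nbhd_def abs_less_iff by fastforce
    then show False
      using miss[OF s(1)] by (simp add: wstar_nbhd_def)
  qed
  moreover have "\<epsilon>/2 > 0"
    using V(2) by simp
  ultimately show ?thesis
    using that V(1) by blast
qed

text \<open>This reduces weak* separation to a separation in finitely many coordinates.\<close>

lemma wstar_compact_uniform_gap: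
  fixes E K :: "('a::real_normed_vector \<Rightarrow>\<^sub>L real) set"
  assumes E: "compactin weak_star E"
    and disjoint: "\<And>e a. e \<in> E \<Longrightarrow> a \<in> wstar_closure K \<Longrightarrow> e + a \<noteq> 0"
  obtains V \<epsilon> where "finite V" "\<epsilon> > 0"
    "\<And>e a. e \<in> E \<Longrightarrow> a \<in> wstar_closure K \<Longrightarrow> \<exists>v\<in>V. \<epsilon> \<le> \<bar>blinfun_apply (e + a) v\<bar>"
proof -
  have "\<exists>V \<epsilon>. finite V \<and> \<epsilon> > 0 \<and> (\<forall>a\<in>wstar_closure K. \<exists>v\<in>V. \<epsilon> \<le> \<bar>blinfun_apply (e + a) v\<bar>)"
    if "e \<in> E" for e
  proof -
    have "- e \<notin> wstar_closure K"
      using disjoint[OF that, of "- e"] by auto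
    then obtain V \<epsilon> where "finite V" "\<epsilon> > 0"
      "\<And>a. a \<in> wstar_closure K \<Longrightarrow> \<exists>v\<in>V. \<epsilon> \<le> \<bar>blinfun_apply a v - blinfun_apply (- e) v\<bar>"
      using wstar_closure_gap by blast
    then show ?thesis
      by (auto simp: blinfun.add_left blinfun.minus_left add.commute)
  qed
  then obtain VV ee where VV: "\<And>e. e \<in> E \<Longrightarrow> finite (VV e) \<and> ee e > 0 \<and>
      (\<forall>a\<in>wstar_closure K. \<exists>v\<in>VV e. ee e \<le> \<bar>blinfun_apply (e + a) v\<bar>)"
    by metis
  have "openin weak_star (wstar_nbhd (VV e) (ee e / 2) e)" if "e \<in> E" for e
    using VV[OF that] by (simp add: openin_wstar_nbhd)
  moreover have "E \<subseteq> (\<Union>e\<in>E. wstar_nbhd (VV e) (ee e / 2) e)"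
    using VV by (force simp: wstar_nbhd_def)
  ultimately obtain E' where E': "finite E'" "E' \<subseteq> E" "E \<subseteq> (\<Union>e\<in>E'. wstar_nbhd (VV e) (ee e / 2) e)"
    using E unfolding compactin_def by (metis (no_types, lifting) finite_subset_image imageE)
  define V where "V = (\<Union>e\<in>E'. VV e)"
  define \<epsilon> where "\<epsilon> = Min (insert 1 ((\<lambda>e. ee e / 2) ` E'))"
  have "finite V"
    using E' VV by (auto simp: V_def)
  moreover have "\<epsilon> > 0"
    using E' VV by (auto simp: \<epsilon>_def Min_gr_iff)
  moreover have \<epsilon>_le: "\<epsilon> \<le> ee e / 2" if "e \<in> E'" for e
    unfolding \<epsilon>_def by (rule Min_le) (use E' that in auto)
  moreover have "\<exists>v\<in>V. \<epsilon> \<le> \<bar>blinfun_apply (b + a) v\<bar>" if b: "b \<in> E" and a: "a \<in> wstar_closure K" for b a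
  proof -
    obtain e where e: "e \<in> E'" "b \<in> wstar_nbhd (VV e) (ee e / 2) e"
      using E'(3) b by blast
    obtain v where v: "v \<in> VV e" "ee e \<le> \<bar>blinfun_apply (e + a) v\<bar>"
      using VV e E'(2) a by blast
    have "\<bar>blinfun_apply b v - blinfun_apply e v\<bar> < ee e / 2"
      using e(2) v(1) by (simp add: wstar_nbhd_def)
    then have "ee e / 2 \<le> \<bar>blinfun_apply (b + a) v\<bar>"
      using v(2) unfolding blinfun.add_left by linarith
    then show ?thesis
      using v(1) e(1) \<epsilon>_le by (force simp: V_def)
  qed
  ultimately show ?thesis
    using that by blast
qed

lemma le_if_quadratic_perturbation_ge:
  fixes d P X :: real
  assumes "\<And>u. 0 < u \<Longrightarrow> u \<le> 1 \<Longrightarrow> d \<le> (1 - u)\<^sup>2 * d + 2 * u * (1 - u) * P + u\<^sup>2 * X"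
  shows "d \<le> P"
proof -
  have "0 \<le> 2 * (P - d) + u * (d - 2 * P + X)" if "0 < u" "u \<le> 1" for u
  proof -
    have "0 \<le> u * (2 * (P - d) + u * (d - 2 * P + X))"
      using assms[OF that] by (simp add: power2_eq_square algebra_simps)
    then show ?thesis
      using that(1) by (simp add: zero_le_mult_iff)
  qed
  then have "\<forall>\<^sub>F u in at_right 0. 0 \<le> 2 * (P - d) + u * (d - 2 * P + X)"
    using eventually_at_right_real[of 0 1] by (auto elim: eventually_mono)
  moreover have "((\<lambda>u. 2 * (P - d) + u * (d - 2 * P + X)) \<longlongrightarrow> 2 * (P - d)) (at_right 0)"
    by (auto intro!: tendsto_eq_intros)
  ultimately have "0 \<le> 2 * (P - d)"
    by (intro tendsto_lowerbound) auto
  then show ?thesis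
    by simp
qed

lemma minimizing_sequence_converges:
  fixes Y :: "('b \<Rightarrow> real) set"
  assumes V: "finite V" and Y: "Y \<noteq> {}"
  obtains y l where "\<And>n. y n \<in> Y" "\<And>v. v \<in> V \<Longrightarrow> (\<lambda>n. y n v) \<longlonglongrightarrow> l v"
    "(\<lambda>n. \<Sum>v\<in>V. (y n v)\<^sup>2) \<longlonglongrightarrow> Inf ((\<lambda>y. \<Sum>v\<in>V. (y v)\<^sup>2) ` Y)"
proof -
  define Q where "Q y = (\<Sum>v\<in>V. (y v)\<^sup>2)" for y :: "'b \<Rightarrow> real"
  define d where "d = Inf (Q ` Y)"
  have bdd: "bdd_below (Q ` Y)"
    by (rule bdd_belowI[of _ 0]) (auto simp: Q_def sum_nonneg)
  have "\<exists>y\<in>Y. Q y < d + inverse (real (Suc n))" for n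
    using cInf_lessD[of "Q ` Y" "d + inverse (real (Suc n))"] Y by (auto simp: d_def)
  then obtain yy where yy: "\<And>n. yy n \<in> Y" "\<And>n. Q (yy n) < d + inverse (real (Suc n))"
    by metis
  have d_le: "d \<le> Q y" if "y \<in> Y" for y
    unfolding d_def by (rule cInf_lower) (use bdd that in auto)
  have "bounded ((\<lambda>y. y k) ` range yy)" if "k \<in> V" for k
  proof -
    have abs_le: "\<bar>t\<bar> \<le> 1 + t\<^sup>2" for t :: real
    proof (cases "\<bar>t\<bar> \<le> 1")
      case False
      then have "\<bar>t\<bar> * 1 \<le> \<bar>t\<bar> * \<bar>t\<bar>"
        by (intro mult_left_mono) auto
      then show ?thesis
        by (simp add: power2_eq_square)
    qed (simp add: add_increasing2)
    have sq_le: "(yy n k)\<^sup>2 \<le> Q (yy n)" for n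
      unfolding Q_def by (rule member_le_sum) (use that V in auto)
    have inv_le: "inverse (real (Suc n)) \<le> 1" for n
      by (simp add: field_simps)
    have "\<bar>yy n k\<bar> \<le> d + 2" for n
      using yy(2)[of n] abs_le[of "yy n k"] sq_le[of n] inv_le[of n] by linarith
    then show ?thesis
      unfolding bounded_iff by auto
  qed
  then obtain l r where r: "strict_mono r"
    and lim: "\<forall>e>0. \<forall>\<^sub>F n in sequentially. \<forall>k\<in>V. dist (yy (r n) k) (l k) < e"
    using compact_lemma_general[where proj = "\<lambda>x k. x k" and unproj = "\<lambda>e. e" and f = yy, OF V] by blast
  have "(\<lambda>n. yy (r n) k) \<longlonglongrightarrow> l k" if "k \<in> V" for k
    unfolding tendsto_iff
  proof (intro allI impI)
    fix e :: real
    assume "e > 0"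
    with lim have "\<forall>\<^sub>F n in sequentially. \<forall>k\<in>V. dist (yy (r n) k) (l k) < e"
      by blast
    then show "\<forall>\<^sub>F n in sequentially. dist (yy (r n) k) (l k) < e"
      by eventually_elim (use that in blast)
  qed
  moreover have "(\<lambda>n. Q (yy (r n))) \<longlonglongrightarrow> d"
  proof (rule tendsto_sandwich[of "\<lambda>n. d" _ _ "\<lambda>n. d + inverse (real (Suc n))"])
    have "Q (yy (r n)) \<le> d + inverse (real (Suc n))" for n
    proof -
      have "inverse (real (Suc (r n))) \<le> inverse (real (Suc n))"
        using seq_suble[OF r, of n] by (simp add: le_imp_inverse_le)
      then show ?thesis
        using yy(2)[of "r n"] by linarith
    qed
    then show "\<forall>\<^sub>F n in sequentially. Q (yy (r n)) \<le> d + inverse (real (Suc n))"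
      by simp
    show "\<forall>\<^sub>F n in sequentially. d \<le> Q (yy (r n))"
      using d_le yy(1) by simp
    show "(\<lambda>n. d + inverse (real (Suc n))) \<longlonglongrightarrow> d"
      using tendsto_add[OF tendsto_const LIMSEQ_inverse_real_of_nat, of d] by simp
  qed simp
  ultimately show ?thesis
    using that[of "yy \<circ> r" l] yy(1) by (simp add: Q_def d_def o_def)
qed

text \<open>The point of \<open>Y\<close> closest to the origin (in the seminorm given by \<open>V\<close>) defines the
  separating functional.\<close>

lemma convex_functions_separation:
  fixes Y :: "('b \<Rightarrow> real) set"
  assumes V: "finite V" and \<epsilon>: "\<epsilon> > 0"
    and convex: "\<And>y x u. y \<in> Y \<Longrightarrow> x \<in> Y \<Longrightarrow> 0 \<le> u \<Longrightarrow> u \<le> 1 \<Longrightarrow> (\<lambda>v. (1 - u) * y v + u * x v) \<in> Y"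
    and far: "\<And>y. y \<in> Y \<Longrightarrow> \<exists>v\<in>V. \<epsilon> \<le> \<bar>y v\<bar>"
  obtains c where "\<And>y. y \<in> Y \<Longrightarrow> \<epsilon>\<^sup>2 \<le> (\<Sum>v\<in>V. c v * y v)"
proof (cases "Y = {}")
  case False
  define Q where "Q y = (\<Sum>v\<in>V. (y v)\<^sup>2)" for y :: "'b \<Rightarrow> real"
  define d where "d = Inf (Q ` Y)"
  obtain y l where y: "\<And>n. y n \<in> Y" and lim: "\<And>v. v \<in> V \<Longrightarrow> (\<lambda>n. y n v) \<longlonglongrightarrow> l v"
    and limQ: "(\<lambda>n. Q (y n)) \<longlonglongrightarrow> d"
    using minimizing_sequence_converges[OF V False] unfolding Q_def d_def by blast
  have bdd: "bdd_below (Q ` Y)"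
    by (rule bdd_belowI[of _ 0]) (auto simp: Q_def sum_nonneg)
  have "\<epsilon>\<^sup>2 \<le> Q x" if x: "x \<in> Y" for x
  proof -
    obtain v where v: "v \<in> V" "\<epsilon> \<le> \<bar>x v\<bar>"
      using far[OF x] by blast
    then have "\<epsilon>\<^sup>2 \<le> (x v)\<^sup>2"
      using \<epsilon> by (metis abs_le_square_iff abs_of_pos)
    also have "\<dots> \<le> Q x"
      unfolding Q_def by (rule member_le_sum) (use v V in auto)
    finally show ?thesis .
  qed
  then have "\<epsilon>\<^sup>2 \<le> d"
    unfolding d_def using False by (intro cInf_greatest) auto
  moreover have "d \<le> (\<Sum>v\<in>V. l v * x v)" if x: "x \<in> Y" for x
  proof (rule le_if_quadratic_perturbation_ge[where X = "Q x"])
    fix u :: real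
    assume u: "0 < u" "u \<le> 1"
    have expand: "Q (\<lambda>v. (1 - u) * y n v + u * x v)
        = (1 - u)\<^sup>2 * Q (y n) + 2 * u * (1 - u) * (\<Sum>v\<in>V. y n v * x v) + u\<^sup>2 * Q x" for n
    proof -
      have "Q (\<lambda>v. (1 - u) * y n v + u * x v)
          = (\<Sum>v\<in>V. (1 - u)\<^sup>2 * (y n v)\<^sup>2 + 2 * u * (1 - u) * (y n v * x v) + u\<^sup>2 * (x v)\<^sup>2)"
        unfolding Q_def by (rule sum.cong) (auto simp: power2_eq_square algebra_simps)
      then show ?thesis
        by (simp add: Q_def sum.distrib sum_distrib_left)
    qed
    have "(\<lambda>n. Q (\<lambda>v. (1 - u) * y n v + u * x v))
        \<longlonglongrightarrow> (1 - u)\<^sup>2 * d + 2 * u * (1 - u) * (\<Sum>v\<in>V. l v * x v) + u\<^sup>2 * Q x"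
      unfolding expand by (intro tendsto_intros limQ lim)
    moreover have "d \<le> Q (\<lambda>v. (1 - u) * y n v + u * x v)" for n
      unfolding d_def using bdd convex[OF y x] u by (intro cInf_lower) auto
    ultimately show "d \<le> (1 - u)\<^sup>2 * d + 2 * u * (1 - u) * (\<Sum>v\<in>V. l v * x v) + u\<^sup>2 * Q x"
      by (intro tendsto_lowerbound) auto
  qed
  ultimately show ?thesis
    using that[of l] by force
qed (use that in simp)

lemma nonneg_if_ray_bounded_below:
  fixes b c :: real
  assumes "\<And>t. t \<ge> 0 \<Longrightarrow> 1 \<le> b + t * c"
  shows "0 \<le> c"
proof (rule ccontr)
  assume "\<not> 0 \<le> c"
  then have "1 \<le> b + ((\<bar>b\<bar> + 1) / - c) * c"
    by (intro assms divide_nonneg_pos) auto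
  with \<open>\<not> 0 \<le> c\<close> show False
    by simp
qed

lemma wstar_compact_convex_cone_separation:
  fixes E K :: "('a::real_normed_vector \<Rightarrow>\<^sub>L real) set"
  assumes E: "compactin weak_star E" "convex E" "E \<noteq> {}"
    and K: "0 \<in> K" "\<And>a b. a \<in> K \<Longrightarrow> b \<in> K \<Longrightarrow> a + b \<in> K"
      "\<And>c a. c \<ge> 0 \<Longrightarrow> a \<in> K \<Longrightarrow> c *\<^sub>R a \<in> K"
    and disjoint: "\<And>e a. e \<in> E \<Longrightarrow> a \<in> wstar_closure K \<Longrightarrow> e + a \<noteq> 0"
  obtains w where "\<And>e. e \<in> E \<Longrightarrow> 1 \<le> blinfun_apply e w"
    "\<And>a. a \<in> wstar_closure K \<Longrightarrow> 0 \<le> blinfun_apply a w"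
proof -
  let ?A = "wstar_closure K"
  have A_scale: "c *\<^sub>R a \<in> ?A" if "c \<ge> 0" "a \<in> ?A" for c a
    using wstar_closure_scaleR[of K a c] K(1,3) that by blast
  have A_convex: "(1 - u) *\<^sub>R a + u *\<^sub>R b \<in> ?A" if "a \<in> ?A" "b \<in> ?A" "0 \<le> u" "u \<le> 1" for a b u
    using that by (intro wstar_closure_add[of K] A_scale K(2)) auto
  have A0: "0 \<in> ?A"
    using K(1) subset_wstar_closure by blast
  obtain V \<epsilon> where V: "finite V" "\<epsilon> > 0"
    and gap: "\<And>e a. e \<in> E \<Longrightarrow> a \<in> ?A \<Longrightarrow> \<exists>v\<in>V. \<epsilon> \<le> \<bar>blinfun_apply (e + a) v\<bar>"
    using wstar_compact_uniform_gap[OF E(1) disjoint] by blast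
  define Y where "Y = {(\<lambda>v. blinfun_apply (e + a) v) | e a. e \<in> E \<and> a \<in> ?A}"
  obtain c where c: "\<And>y. y \<in> Y \<Longrightarrow> \<epsilon>\<^sup>2 \<le> (\<Sum>v\<in>V. c v * y v)"
  proof (rule convex_functions_separation[OF V])
    fix y x and u :: real
    assume "y \<in> Y" "x \<in> Y" and u: "0 \<le> u" "u \<le> 1"
    then obtain e1 a1 e2 a2 where ea: "e1 \<in> E" "a1 \<in> ?A" "y = (\<lambda>v. blinfun_apply (e1 + a1) v)"
      "e2 \<in> E" "a2 \<in> ?A" "x = (\<lambda>v. blinfun_apply (e2 + a2) v)"
      unfolding Y_def by blast
    have "(1 - u) *\<^sub>R e1 + u *\<^sub>R e2 \<in> E"
      using E(2) ea u unfolding convex_def by auto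
    moreover have "(1 - u) *\<^sub>R a1 + u *\<^sub>R a2 \<in> ?A"
      using A_convex ea u by blast
    moreover have "(\<lambda>v. (1 - u) * y v + u * x v)
        = (\<lambda>v. blinfun_apply (((1 - u) *\<^sub>R e1 + u *\<^sub>R e2) + ((1 - u) *\<^sub>R a1 + u *\<^sub>R a2)) v)"
      unfolding ea(3,6) by (rule ext) (simp add: blinfun.add_left blinfun.diff_left blinfun.scaleR_left algebra_simps)
    ultimately show "(\<lambda>v. (1 - u) * y v + u * x v) \<in> Y"
      unfolding Y_def by blast
  next
    show "\<exists>v\<in>V. \<epsilon> \<le> \<bar>y v\<bar>" if "y \<in> Y" for y
      using that gap unfolding Y_def by blast
  qed blast
  define w where "w = (1 / \<epsilon>\<^sup>2) *\<^sub>R (\<Sum>v\<in>V. c v *\<^sub>R v)"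
  have ge: "1 \<le> blinfun_apply (e + a) w" if "e \<in> E" "a \<in> ?A" for e a
  proof -
    have "\<epsilon>\<^sup>2 \<le> (\<Sum>v\<in>V. c v * blinfun_apply (e + a) v)"
      using c that unfolding Y_def by blast
    then show ?thesis
      using V(2) by (simp add: w_def blinfun.scaleR_right blinfun.sum_right field_simps)
  qed
  obtain e0 where e0: "e0 \<in> E"
    using E(3) by blast
  have "0 \<le> blinfun_apply a w" if a: "a \<in> ?A" for a
  proof (rule nonneg_if_ray_bounded_below)
    show "1 \<le> blinfun_apply e0 w + t * blinfun_apply a w" if "t \<ge> 0" for t
      using ge[OF e0 A_scale[OF that a]] by (simp add: blinfun.add_left blinfun.scaleR_left)
  qed
  moreover have "1 \<le> blinfun_apply e w" if "e \<in> E" for e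
    using ge[OF that A0] by simp
  ultimately show ?thesis
    using that by blast
qed

definition pointwise_bounded :: "('a::real_normed_vector \<Rightarrow>\<^sub>L real) set \<Rightarrow> bool" where
  "pointwise_bounded C \<longleftrightarrow> (\<forall>v. bounded ((\<lambda>a. blinfun_apply a v) ` C))"

lemma pointwise_bounded_if_compactin: "compactin weak_star C \<Longrightarrow> pointwise_bounded C"
  by (simp add: pointwise_bounded_def bounded_eval_if_compactin_weak_star)

lemma pointwise_bounded_translation:
  assumes "pointwise_bounded L"
  shows "pointwise_bounded ((\<lambda>a. a + y) ` L)"
  unfolding pointwise_bounded_def
proof
  fix v
  obtain B where "\<forall>a\<in>L. \<bar>blinfun_apply a v\<bar> \<le> B"
    using assms unfolding pointwise_bounded_def bounded_iff by auto
  then have "\<forall>a\<in>L. \<bar>blinfun_apply (a + y) v\<bar> \<le> B + \<bar>blinfun_apply y v\<bar>"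
    by (auto simp: blinfun.add_left intro: order.trans[OF abs_triangle_ineq])
  then show "bounded ((\<lambda>a. blinfun_apply a v) ` (\<lambda>a. a + y) ` L)"
    unfolding bounded_iff by auto
qed

lemma pointwise_bounded_reflection:
  assumes "pointwise_bounded U"
  shows "pointwise_bounded ((\<lambda>b. - x - b) ` U)"
  unfolding pointwise_bounded_def
proof
  fix v
  obtain B where "\<forall>b\<in>U. \<bar>blinfun_apply b v\<bar> \<le> B"
    using assms unfolding pointwise_bounded_def bounded_iff by auto
  then have "\<forall>b\<in>U. \<bar>blinfun_apply (- x - b) v\<bar> \<le> B + \<bar>blinfun_apply x v\<bar>"
    by (auto simp: blinfun.diff_left blinfun.minus_left)
  then show "bounded ((\<lambda>a. blinfun_apply a v) ` (\<lambda>b. - x - b) ` U)"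
    unfolding bounded_iff by auto
qed

lemma supp_upper: "pointwise_bounded C \<Longrightarrow> a \<in> C \<Longrightarrow> blinfun_apply a v \<le> supp C v"
  unfolding supp_def pointwise_bounded_def by (rule cSup_upper) (auto intro: bounded_imp_bdd_above)

lemma supp_least: "C \<noteq> {} \<Longrightarrow> (\<And>a. a \<in> C \<Longrightarrow> blinfun_apply a v \<le> c) \<Longrightarrow> supp C v \<le> c"
  unfolding supp_def by (rule cSup_least) auto

lemma supp_zero: "C \<noteq> {} \<Longrightarrow> supp C 0 = 0"
  by (simp add: supp_def blinfun.zero_right image_constant_conv)

lemma supp_add_le:
  assumes "C \<noteq> {}" "pointwise_bounded C"
  shows "supp C (u + w) \<le> supp C u + supp C w"
  using assms by (intro supp_least) (auto simp: blinfun.add_right intro: add_mono supp_upper)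

lemma supp_scaleR_le:
  assumes "C \<noteq> {}" "pointwise_bounded C" "c \<ge> 0"
  shows "supp C (c *\<^sub>R v) \<le> c * supp C v"
  using assms by (intro supp_least) (auto simp: blinfun.scaleR_right intro: mult_left_mono supp_upper)

lemma supp_sum_le:
  assumes "C \<noteq> {}" "pointwise_bounded C"
  shows "supp C (\<Sum>k\<in>K. w k) \<le> (\<Sum>k\<in>K. supp C (w k))"
proof (induction K rule: infinite_finite_induct)
  case (insert k K)
  then show ?case
    using supp_add_le[OF assms, of "w k" "\<Sum>k\<in>K. w k"] by simp
qed (use assms in \<open>simp_all add: supp_zero\<close>)

lemma quasidiff_pointwise_bounded:
  "quasidiff f x L U \<Longrightarrow> pointwise_bounded L \<and> pointwise_bounded U"
  by (simp add: quasidiff_def pointwise_bounded_if_compactin)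

lemma quasidiff_dir_deriv_le_supp:
  assumes qd: "quasidiff f x L U" and y: "y \<in> U"
  shows "dir_deriv f x d \<le> supp ((\<lambda>a. a + y) ` L) d"
proof -
  have bdd: "pointwise_bounded L" "pointwise_bounded U" and "L \<noteq> {}"
    using qd quasidiff_pointwise_bounded by (auto simp: quasidiff_def)
  have "Inf ((\<lambda>b. blinfun_apply b d) ` U) \<le> blinfun_apply y d"
    using y bdd(2) by (intro cInf_lower) (auto simp: pointwise_bounded_def intro: bounded_imp_bdd_below)
  moreover have "blinfun_apply a d \<le> supp ((\<lambda>a. a + y) ` L) d - blinfun_apply y d" if "a \<in> L" for a
    using supp_upper[OF pointwise_bounded_translation[OF bdd(1)], of "a + y" y d] that
    by (simp add: blinfun.add_left)
  then have "Sup ((\<lambda>a. blinfun_apply a d) ` L) \<le> supp ((\<lambda>a. a + y) ` L) d - blinfun_apply y d"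
    using \<open>L \<noteq> {}\<close> by (intro cSup_least) auto
  ultimately show ?thesis
    using qd by (simp add: quasidiff_def)
qed

lemma quasidiff_neg_supp_le_dir_deriv:
  assumes qd: "quasidiff f x L U" and x': "x' \<in> L"
  shows "- supp ((\<lambda>b. - x' - b) ` U) d \<le> dir_deriv f x d"
proof -
  have bdd: "pointwise_bounded L" "pointwise_bounded U" and "U \<noteq> {}"
    using qd quasidiff_pointwise_bounded by (auto simp: quasidiff_def)
  have "blinfun_apply x' d \<le> Sup ((\<lambda>a. blinfun_apply a d) ` L)"
    using x' bdd(1) by (intro cSup_upper) (auto simp: pointwise_bounded_def intro: bounded_imp_bdd_above)
  moreover have "- blinfun_apply x' d - supp ((\<lambda>b. - x' - b) ` U) d \<le> blinfun_apply b d" if "b \<in> U" for b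
    using supp_upper[OF pointwise_bounded_reflection[OF bdd(2)], of "- x' - b" x' d] that
    by (simp add: blinfun.diff_left blinfun.minus_left)
  then have "- blinfun_apply x' d - supp ((\<lambda>b. - x' - b) ` U) d \<le> Inf ((\<lambda>b. blinfun_apply b d) ` U)"
    using \<open>U \<noteq> {}\<close> by (intro cInf_greatest) auto
  ultimately show ?thesis
    using qd by (simp add: quasidiff_def)
qed

lemma cone_fam_zero: "0 \<in> cone_fam CC"
  unfolding cone_fam_def by (intro CollectI exI[of _ "{}"]) auto

lemma cone_fam_mem: "u \<in> C \<Longrightarrow> C \<in> CC \<Longrightarrow> u \<in> cone_fam CC"
  unfolding cone_fam_def by (intro CollectI exI[of _ "{u}"] exI[of _ "\<lambda>_. 1"]) auto

lemma cone_fam_scaleR: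
  assumes "c \<ge> 0" "y \<in> cone_fam CC"
  shows "c *\<^sub>R y \<in> cone_fam CC"
proof -
  obtain F d where F: "finite F" "F \<subseteq> \<Union>CC" "\<forall>u\<in>F. d u \<ge> 0" "y = (\<Sum>u\<in>F. d u *\<^sub>R u)"
    using assms(2) unfolding cone_fam_def by blast
  then have "c *\<^sub>R y = (\<Sum>u\<in>F. (c * d u) *\<^sub>R u)"
    by (simp add: scaleR_sum_right)
  then show ?thesis
    unfolding cone_fam_def using F assms(1) by (intro CollectI exI[of _ F] exI[of _ "\<lambda>u. c * d u"]) auto
qed

lemma cone_fam_add:
  assumes "y1 \<in> cone_fam CC" "y2 \<in> cone_fam CC"
  shows "y1 + y2 \<in> cone_fam CC"
proof -
  obtain F1 d1 F2 d2 where F1: "finite F1" "F1 \<subseteq> \<Union>CC" "\<forall>u\<in>F1. d1 u \<ge> 0" "y1 = (\<Sum>u\<in>F1. d1 u *\<^sub>R u)"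
    and F2: "finite F2" "F2 \<subseteq> \<Union>CC" "\<forall>u\<in>F2. d2 u \<ge> 0" "y2 = (\<Sum>u\<in>F2. d2 u *\<^sub>R u)"
    using assms unfolding cone_fam_def by blast
  define d where "d u = (if u \<in> F1 then d1 u else 0) + (if u \<in> F2 then d2 u else 0)" for u
  have "y1 = (\<Sum>u\<in>F1 \<union> F2. (if u \<in> F1 then d1 u else 0) *\<^sub>R u)"
    "y2 = (\<Sum>u\<in>F1 \<union> F2. (if u \<in> F2 then d2 u else 0) *\<^sub>R u)"
    using F1 F2 by (auto intro!: sum.mono_neutral_cong_left)
  then have "y1 + y2 = (\<Sum>u\<in>F1 \<union> F2. d u *\<^sub>R u)"
    by (simp add: d_def scaleR_add_left sum.distrib)
  then show ?thesis
    unfolding cone_fam_def using F1 F2 by (intro CollectI exI[of _ "F1 \<union> F2"] exI[of _ d]) (auto simp: d_def)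
qed

lemma cone_fam_halfspace:
  fixes CC :: "('a::real_normed_vector \<Rightarrow>\<^sub>L real) set set"
  assumes "\<And>u. u \<in> \<Union>CC \<Longrightarrow> blinfun_apply u v \<le> 0" "a \<in> cone_fam CC"
  shows "blinfun_apply a v \<le> 0"
proof -
  obtain F c where F: "F \<subseteq> \<Union>CC" "\<forall>u\<in>F. c u \<ge> 0" "a = (\<Sum>u\<in>F. c u *\<^sub>R u)"
    using assms(2) unfolding cone_fam_def by blast
  then have "(\<Sum>u\<in>F. c u * blinfun_apply u v) \<le> 0"
    using assms(1) by (intro sum_nonpos mult_nonneg_nonpos) auto
  then show ?thesis
    using F(3) by (simp add: blinfun.sum_left blinfun.scaleR_left)
qed

lemma wstar_gordan_alternative:
  fixes P :: "'i \<Rightarrow> ('a::real_normed_vector \<Rightarrow>\<^sub>L real) set"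
  assumes J: "finite J"
    and P: "\<And>j. j \<in> J \<Longrightarrow> convex (P j) \<and> P j \<noteq> {} \<and> compactin weak_star (P j)"
    and K: "0 \<in> K" "\<And>a b. a \<in> K \<Longrightarrow> b \<in> K \<Longrightarrow> a + b \<in> K"
      "\<And>c a. c \<ge> 0 \<Longrightarrow> a \<in> K \<Longrightarrow> c *\<^sub>R a \<in> K"
    and no_descent: "\<And>w. \<forall>a\<in>K. blinfun_apply a w \<le> 0 \<Longrightarrow> \<forall>j\<in>J. supp (P j) w < 0 \<Longrightarrow> False"
  obtains \<mu> p a where "\<forall>j\<in>J. \<mu> j \<ge> 0" "sum \<mu> J = 1" "\<forall>j\<in>J. p j \<in> P j" "a \<in> wstar_closure K"
    "(\<Sum>j\<in>J. \<mu> j *\<^sub>R p j) + a = 0"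
proof -
  define E where "E = convex hull (\<Union>(P ` J))"
  have "J \<noteq> {}"
    using no_descent[of 0] by (auto simp: blinfun.zero_right)
  then have "E \<noteq> {}"
    using P by (auto simp: E_def)
  have E: "compactin weak_star E" "convex E"
    unfolding E_def using compactin_weak_star_convex_hull_Union[OF J P] by auto
  have "\<exists>e\<in>E. \<exists>a\<in>wstar_closure K. e + a = 0"
  proof (rule ccontr)
    assume "\<not> ?thesis"
    then obtain w where w: "\<And>e. e \<in> E \<Longrightarrow> 1 \<le> blinfun_apply e w"
      "\<And>a. a \<in> wstar_closure K \<Longrightarrow> 0 \<le> blinfun_apply a w"
      using wstar_compact_convex_cone_separation[OF E \<open>E \<noteq> {}\<close> K] by blast
    show False
    proof (rule no_descent[of "- w"])
      show "\<forall>a\<in>K. blinfun_apply a (- w) \<le> 0"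
        using w(2) subset_wstar_closure by (force simp: blinfun.minus_right)
      have "supp (P j) (- w) \<le> - 1" if "j \<in> J" for j
        using P[OF that] w(1) that hull_subset[of "\<Union>(P ` J)"]
        by (intro supp_least) (auto simp: E_def blinfun.minus_right)
      then show "\<forall>j\<in>J. supp (P j) (- w) < 0"
        by force
    qed
  qed
  then obtain e a where "e \<in> E" "a \<in> wstar_closure K" "e + a = 0"
    by blast
  moreover have "E = {\<Sum>j\<in>J. c j *\<^sub>R p j | c p. (\<forall>j\<in>J. c j \<ge> 0) \<and> sum c J = 1 \<and> (\<forall>j\<in>J. p j \<in> P j)}"
    unfolding E_def using P by (intro convex_hull_finite_union[OF J]) auto
  ultimately obtain \<mu> p where "e = (\<Sum>j\<in>J. \<mu> j *\<^sub>R p j)" "\<forall>j\<in>J. \<mu> j \<ge> 0" "sum \<mu> J = 1" "\<forall>j\<in>J. p j \<in> P j"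
    by blast
  with \<open>a \<in> wstar_closure K\<close> \<open>e + a = 0\<close> show ?thesis
    using that by blast
qed

text \<open>The Slater-type direction \<open>v0\<close> forces the weight of \<open>P j0\<close> to be positive.\<close>

lemma wstar_multiplier_rule:
  fixes P :: "'i \<Rightarrow> ('a::real_normed_vector \<Rightarrow>\<^sub>L real) set"
  assumes J: "finite J" "j0 \<in> J"
    and P: "\<And>j. j \<in> J \<Longrightarrow> convex (P j) \<and> P j \<noteq> {} \<and> compactin weak_star (P j)"
    and K: "0 \<in> K" "\<And>a b. a \<in> K \<Longrightarrow> b \<in> K \<Longrightarrow> a + b \<in> K"
      "\<And>c a. c \<ge> 0 \<Longrightarrow> a \<in> K \<Longrightarrow> c *\<^sub>R a \<in> K"
    and no_descent: "\<And>w. \<forall>a\<in>K. blinfun_apply a w \<le> 0 \<Longrightarrow> \<forall>j\<in>J. supp (P j) w < 0 \<Longrightarrow> False"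
    and slater: "\<And>a. a \<in> K \<Longrightarrow> blinfun_apply a v0 \<le> 0" "\<And>j. j \<in> J - {j0} \<Longrightarrow> supp (P j) v0 < 0"
  obtains lam p a where "\<forall>j\<in>J. lam j \<ge> 0" "lam j0 = 1" "\<forall>j\<in>J. p j \<in> P j" "a \<in> wstar_closure K"
    "(\<Sum>j\<in>J. lam j *\<^sub>R p j) + a = 0"
proof -
  obtain \<mu> p a where \<mu>: "\<forall>j\<in>J. \<mu> j \<ge> 0" "sum \<mu> J = 1" and p: "\<forall>j\<in>J. p j \<in> P j"
    and a: "a \<in> wstar_closure K" and zero: "(\<Sum>j\<in>J. \<mu> j *\<^sub>R p j) + a = 0"
    using wstar_gordan_alternative[of J P K] J(1) P K no_descent by blast
  have "\<mu> j0 > 0"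
  proof (rule ccontr)
    assume "\<not> \<mu> j0 > 0"
    then have "\<mu> j0 = 0"
      using \<mu>(1) J(2) by force
    then have "sum \<mu> (J - {j0}) = 1"
      using \<mu>(2) J by (simp add: sum_diff1)
    then obtain j where j: "j \<in> J - {j0}" "\<mu> j > 0"
      using \<mu>(1) by (metis DiffD1 le_less sum_nonpos zero_less_one not_le)
    have neg: "blinfun_apply (p i) v0 < 0" if "i \<in> J - {j0}" for i
      using supp_upper[of "P i" "p i" v0] slater(2)[OF that] P p that
      by (force dest: pointwise_bounded_if_compactin)
    have "(\<Sum>i\<in>J - {j0}. \<mu> i * blinfun_apply (p i) v0) < (\<Sum>i\<in>J - {j0}. 0)"
    proof (rule sum_strict_mono_ex1)
      show "\<forall>i\<in>J - {j0}. \<mu> i * blinfun_apply (p i) v0 \<le> 0"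
        using \<mu>(1) neg by (auto intro: mult_nonneg_nonpos less_imp_le)
      show "\<exists>i\<in>J - {j0}. \<mu> i * blinfun_apply (p i) v0 < 0"
        using j neg[OF j(1)] mult_pos_neg by blast
    qed (use J in simp)
    moreover have "blinfun_apply a v0 \<le> 0"
      by (rule wstar_closure_halfspace[OF slater(1) a])
    moreover have "(\<Sum>i\<in>J. \<mu> i * blinfun_apply (p i) v0) + blinfun_apply a v0 = 0"
      using arg_cong[OF zero, of "\<lambda>x. blinfun_apply x v0"]
      by (simp add: blinfun.add_left blinfun.sum_left blinfun.scaleR_left)
    ultimately show False
      using \<open>\<mu> j0 = 0\<close> J by (simp add: sum.remove)
  qed
  define lam where "lam j = \<mu> j / \<mu> j0" for j
  have "(1 / \<mu> j0) *\<^sub>R a \<in> wstar_closure K"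
    using \<open>\<mu> j0 > 0\<close> K(1,3) a by (intro wstar_closure_scaleR) auto
  moreover have "(\<Sum>j\<in>J. lam j *\<^sub>R p j) + (1 / \<mu> j0) *\<^sub>R a = 0"
    using arg_cong[OF zero, of "scaleR (1 / \<mu> j0)"]
    by (simp add: lam_def scaleR_add_right scaleR_sum_right)
  ultimately show ?thesis
    using that[of lam] \<mu>(1) p \<open>\<mu> j0 > 0\<close> by (simp add: lam_def)
qed

lemma dir_diff_tendsto:
  assumes "dir_diff f x"
  shows "((\<lambda>t. (f (x + t *\<^sub>R v) - f x) / t) \<longlongrightarrow> dir_deriv f x v) (at_right 0)"
proof -
  obtain L where L: "((\<lambda>t. (f (x + t *\<^sub>R v) - f x) / t) \<longlongrightarrow> L) (at_right 0)"
    using assms unfolding dir_diff_def by blast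
  moreover from L have "dir_deriv f x v = L"
    unfolding dir_deriv_def by (intro tendsto_Lim) simp_all
  ultimately show ?thesis
    by simp
qed

lemma unif_dir_diff_uniformly_on_compact:
  fixes f :: "'a::real_normed_vector \<Rightarrow> real"
  assumes ud: "unif_dir_diff f x" and D: "compact D" and B: "finite B"
    and DB: "\<And>d. d \<in> D \<Longrightarrow> d - u \<in> span B" and \<theta>: "\<theta> > 0"
  shows "\<forall>\<^sub>F t in at_right 0. \<forall>d\<in>D. \<bar>(f (x + t *\<^sub>R d) - f x) / t - dir_deriv f x d\<bar> < \<theta>"
proof -
  have "\<exists>\<delta>>0. \<forall>t w. 0 < t \<and> t < \<delta> \<and> w - c \<in> span B \<and> norm (w - c) < \<delta>
      \<longrightarrow> \<bar>(f (x + t *\<^sub>R w) - f x) / t - dir_deriv f x c\<bar> < \<theta>/2" for c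
  proof -
    have "finite B \<and> \<theta>/2 > 0"
      using B \<theta> by simp
    then show ?thesis
      using ud unfolding unif_dir_diff_def by blast
  qed
  then obtain \<delta> where \<delta>: "\<And>c. \<delta> c > 0"
    and near: "\<And>c t w. 0 < t \<Longrightarrow> t < \<delta> c \<Longrightarrow> w - c \<in> span B \<Longrightarrow> norm (w - c) < \<delta> c
        \<Longrightarrow> \<bar>(f (x + t *\<^sub>R w) - f x) / t - dir_deriv f x c\<bar> < \<theta>/2"
    by metis
  obtain D' where D': "D' \<subseteq> D" "finite D'" "D \<subseteq> (\<Union>c\<in>D'. ball c (\<delta> c))"
    using compactE_image[OF D, of D "\<lambda>c. ball c (\<delta> c)"] \<delta> by force
  define \<tau> where "\<tau> = Min (insert 1 (\<delta> ` D'))"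
  have \<tau>: "\<tau> > 0"
    using D' \<delta> by (auto simp: \<tau>_def Min_gr_iff)
  have \<tau>_le: "\<tau> \<le> \<delta> c" if "c \<in> D'" for c
    unfolding \<tau>_def by (rule Min_le) (use D' that in auto)
  have "\<bar>(f (x + t *\<^sub>R d) - f x) / t - dir_deriv f x d\<bar> < \<theta>" if t: "0 < t" "t < \<tau>" and d: "d \<in> D" for t d
  proof -
    obtain c where c: "c \<in> D'" "norm (d - c) < \<delta> c"
      using D'(3) d by (auto simp: dist_norm norm_minus_commute)
    have "d - c = (d - u) - (c - u)"
      by simp
    then have dc: "d - c \<in> span B"
      using DB d c(1) D'(1) by (metis span_diff subsetD)
    have close: "\<bar>(f (x + s *\<^sub>R d) - f x) / s - dir_deriv f x c\<bar> < \<theta>/2" if "0 < s" "s < \<tau>" for s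
      using near[OF that(1) _ dc c(2)] that \<tau>_le[OF c(1)] by linarith
    have "((\<lambda>s. \<bar>(f (x + s *\<^sub>R d) - f x) / s - dir_deriv f x c\<bar>) \<longlongrightarrow> \<bar>dir_deriv f x d - dir_deriv f x c\<bar>) (at_right 0)"
      using ud unfolding unif_dir_diff_def by (intro tendsto_intros dir_diff_tendsto) auto
    moreover have "\<forall>\<^sub>F s in at_right 0. \<bar>(f (x + s *\<^sub>R d) - f x) / s - dir_deriv f x c\<bar> \<le> \<theta>/2"
      using eventually_at_right_real[OF \<tau>] by eventually_elim (use close in \<open>auto intro: less_imp_le\<close>)
    ultimately have "\<bar>dir_deriv f x d - dir_deriv f x c\<bar> \<le> \<theta>/2"
      by (intro tendsto_upperbound) auto
    then show ?thesis
      using close[OF t] by linarith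
  qed
  then show ?thesis
    using eventually_at_right_real[OF \<tau>] by (auto elim: eventually_mono)
qed

lemma hadamard_descent:
  assumes had: "hadamard_dir_diff f x" and dd: "dir_diff f x" and neg: "dir_deriv f x w < 0"
  obtains \<eta> where "\<eta> > 0" "\<And>t w'. 0 < t \<Longrightarrow> t < \<eta> \<Longrightarrow> norm (w' - w) < \<eta> \<Longrightarrow> f (x + t *\<^sub>R w') < f x"
proof -
  define F where "F = at ((0::real), w) within ({0<..} \<times> UNIV)"
  define G where "G = (\<lambda>(t::real, w'). (f (x + t *\<^sub>R w') - f x) / t)"
  obtain L where L: "(G \<longlongrightarrow> L) F"
    using had unfolding hadamard_dir_diff_def G_def F_def by blast
  have "filterlim (\<lambda>t. (t, w)) F (at_right 0)"
    unfolding F_def filterlim_at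
    by (auto intro!: tendsto_eq_intros eventually_mono[OF eventually_at_right_less])
  then have "((\<lambda>t. G (t, w)) \<longlongrightarrow> L) (at_right 0)"
    by (rule filterlim_compose[OF L])
  then have "L = dir_deriv f x w"
    using dir_diff_tendsto[OF dd, of w] by (intro tendsto_unique[OF trivial_limit_at_right_real]) (auto simp: G_def)
  then have "\<forall>\<^sub>F p in F. G p < 0"
    using L neg by (auto intro: order_tendstoD)
  then obtain \<delta> where \<delta>: "\<delta> > 0" "\<And>t w'. 0 < t \<Longrightarrow> dist (t, w') (0, w) < \<delta> \<Longrightarrow> G (t, w') < 0"
    unfolding F_def eventually_at by force
  show ?thesis
  proof
    show "\<delta> / 2 > 0"
      using \<delta>(1) by simp
    fix t w'
    assume t: "0 < t" "t < \<delta> / 2" and w': "norm (w' - w) < \<delta> / 2"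
    have "dist (t, w') (0, w) \<le> t + dist w' w"
      unfolding dist_Pair_Pair using sqrt_sum_squares_le_sum_abs[of t "dist w' w"] t by (simp add: dist_real_def)
    also have "\<dots> < \<delta>"
      using t w' by (simp add: dist_norm)
    finally have "G (t, w') < 0"
      using \<delta>(2) t by blast
    then show "f (x + t *\<^sub>R w') < f x"
      using t by (simp add: G_def divide_less_0_iff)
  qed
qed

lemma unif_dir_diff_eventually_neg:
  fixes g :: "'a::real_normed_vector \<Rightarrow> real"
  assumes ud: "unif_dir_diff g x" and g0: "g x = 0" and D: "compact D" "finite B" "\<And>d. d \<in> D \<Longrightarrow> d - u \<in> span B"
    and \<gamma>: "\<gamma> > 0" "\<And>d. d \<in> D \<Longrightarrow> dir_deriv g x d \<le> - \<gamma>"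
  shows "\<forall>\<^sub>F t in at_right 0. \<forall>d\<in>D. g (x + t *\<^sub>R d) < 0"
proof -
  have "\<forall>\<^sub>F t in at_right 0. \<forall>d\<in>D. \<bar>(g (x + t *\<^sub>R d) - g x) / t - dir_deriv g x d\<bar> < \<gamma>"
    by (rule unif_dir_diff_uniformly_on_compact[OF ud D(1,2)]) (use D(3) \<gamma> in auto)
  then show ?thesis
    using eventually_at_right_less
  proof eventually_elim
    case (elim t)
    have "(g (x + t *\<^sub>R d) - g x) / t < 0" if "d \<in> D" for d
      using elim(1) \<gamma>(2)[OF that] that by force
    then show ?case
      using elim(2) g0 by (simp add: divide_less_0_iff)
  qed
qed

lemma eventually_in_ball_along_bounded:
  fixes x :: "'a::real_normed_vector"
  assumes "\<rho> > 0" "bounded D"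
  shows "\<forall>\<^sub>F t in at_right 0. \<forall>d\<in>D. x + t *\<^sub>R d \<in> ball x \<rho>"
proof -
  obtain R where R: "R > 0" "\<And>d. d \<in> D \<Longrightarrow> norm d \<le> R"
    using assms(2) by (meson bounded_pos)
  have "x + t *\<^sub>R d \<in> ball x \<rho>" if "0 < t" "t < \<rho> / R" "d \<in> D" for t d
  proof -
    have "t * norm d \<le> t * R"
      using that R by (intro mult_left_mono) auto
    also have "\<dots> < \<rho>"
      using that R by (simp add: field_simps)
    finally show ?thesis
      using that(1) by (simp add: dist_norm)
  qed
  then show ?thesis
    using eventually_at_right_real[of 0 "\<rho> / R"] assms(1) R(1) by (auto elim: eventually_mono)
qed

lemma usc_eventually_neg:
  fixes g :: "'a::real_normed_vector \<Rightarrow> real"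
  assumes usc: "usc_at g x" and neg: "g x < 0" and D: "bounded D"
  shows "\<forall>\<^sub>F t in at_right 0. \<forall>d\<in>D. g (x + t *\<^sub>R d) < 0"
proof -
  have "\<forall>\<^sub>F y in at x. g y < 0"
    using usc neg unfolding usc_at_def by (metis add.right_inverse neg_0_less_iff_less)
  then obtain \<rho> where "\<rho> > 0" and near: "\<And>y. y \<noteq> x \<Longrightarrow> dist y x < \<rho> \<Longrightarrow> g y < 0"
    unfolding eventually_at by auto
  have "g y < 0" if "y \<in> ball x \<rho>" for y
    using near[of y] neg that by (cases "y = x") (auto simp: dist_commute)
  then show ?thesis
    using eventually_in_ball_along_bounded[OF \<open>\<rho> > 0\<close> D, of x] by (auto elim: eventually_mono)
qed

lemma outward_if_coercive:
  fixes s F D :: "nat \<Rightarrow> real"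
  assumes s: "s \<in> sphere_upto m" and approx: "\<And>k. k < m \<Longrightarrow> \<bar>F k - D k\<bar> < \<theta>"
    and coercive: "\<And>k. k < m \<Longrightarrow> \<kappa> * (s k)\<^sup>2 \<le> s k * D k" and small: "real m * \<theta> < \<kappa>"
  shows "(\<Sum>k<m. s k * F k) > 0"
proof -
  have "\<kappa> * (s k)\<^sup>2 - \<theta> \<le> s k * F k" if k: "k < m" for k
  proof -
    have "\<bar>s k * (F k - D k)\<bar> \<le> 1 * \<theta>"
      unfolding abs_mult using approx[OF k] abs_le_one_if_in_ball_upto[OF _ k, of s] s
        sphere_upto_subset_ball_upto by (intro mult_mono) auto
    then show ?thesis
      using coercive[OF k] by (simp add: algebra_simps abs_le_iff)
  qed
  then have "(\<Sum>k<m. \<kappa> * (s k)\<^sup>2 - \<theta>) \<le> (\<Sum>k<m. s k * F k)"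
    by (intro sum_mono) auto
  moreover have "(\<Sum>k<m. \<kappa> * (s k)\<^sup>2 - \<theta>) = \<kappa> - real m * \<theta>"
    using s by (simp add: sum_subtractf sphere_upto_def sqnorm_upto_def flip: sum_distrib_left)
  ultimately show ?thesis
    using small by linarith
qed

text \<open>The equality constraints are solved by the acute angle lemma applied, for each small
  \<open>t\<close>, to the field \<open>s \<mapsto> (f\<^sub>k(x + t dir(s)) - f\<^sub>k(x)) / t\<close>, which is uniformly close to
  the coercive field \<open>s \<mapsto> f\<^sub>k'(x; dir(s))\<close>.\<close>

lemma eventually_common_zero_along_ball:
  fixes f :: "nat \<Rightarrow> 'a::real_normed_vector \<Rightarrow> real" and dir :: "(nat \<Rightarrow> real) \<Rightarrow> 'a"
  assumes f_cont: "\<And>i. i \<in> {1..m} \<Longrightarrow> \<exists>S. open S \<and> x \<in> S \<and> continuous_on S (f i)"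
    and f_unif: "\<And>i. i \<in> {1..m} \<Longrightarrow> unif_dir_diff (f i) x"
    and f_zero: "\<And>i. i \<in> {1..m} \<Longrightarrow> f i x = 0"
    and dir: "continuous_on (ball_upto m) dir" "finite B" "\<And>s. s \<in> ball_upto m \<Longrightarrow> dir s - u \<in> span B"
    and coercive: "\<kappa> > 0"
      "\<And>s k. s \<in> ball_upto m \<Longrightarrow> k < m \<Longrightarrow> \<kappa> * (s k)\<^sup>2 \<le> s k * dir_deriv (f (Suc k)) x (dir s)"
  shows "\<forall>\<^sub>F t in at_right 0. \<exists>s\<in>ball_upto m. \<forall>i\<in>{1..m}. f i (x + t *\<^sub>R dir s) = 0"
proof -
  define D where "D = dir ` ball_upto m"
  have D: "compact D"
    unfolding D_def by (rule compact_continuous_image[OF dir(1) compact_ball_upto])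
  define \<theta> where "\<theta> = \<kappa> / (2 * (real m + 1))"
  have "real m * \<theta> = \<kappa> * (real m / (2 * (real m + 1)))"
    by (simp add: \<theta>_def)
  also have "\<dots> < \<kappa> * 1"
    using coercive(1) by (intro mult_strict_left_mono) (auto simp: field_simps)
  finally have \<theta>: "\<theta> > 0" "real m * \<theta> < \<kappa>"
    using coercive(1) by (auto simp: \<theta>_def)
  obtain SS where SS: "\<And>i. i \<in> {1..m} \<Longrightarrow> open (SS i) \<and> x \<in> SS i \<and> continuous_on (SS i) (f i)"
    using f_cont by metis
  obtain \<rho> where \<rho>: "\<rho> > 0" "ball x \<rho> \<subseteq> (\<Inter>i\<in>{1..m}. SS i)"
    using SS by (metis (no_types, lifting) INT_I finite_atLeastAtMost open_INT openE)
  have "\<forall>\<^sub>F t in at_right 0. \<forall>i\<in>{1..m}. \<forall>d\<in>D. \<bar>(f i (x + t *\<^sub>R d) - f i x) / t - dir_deriv (f i) x d\<bar> < \<theta>"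
    using dir(3) \<theta>(1) by (intro eventually_ball_finite ballI unif_dir_diff_uniformly_on_compact[OF f_unif D dir(2)])
      (auto simp: D_def)
  moreover have "\<forall>\<^sub>F t in at_right 0. \<forall>d\<in>D. x + t *\<^sub>R d \<in> ball x \<rho>"
    using \<rho>(1) compact_imp_bounded[OF D] by (rule eventually_in_ball_along_bounded)
  ultimately show ?thesis
    using eventually_at_right_less
  proof eventually_elim
    case (elim t)
    define F where "F s k = (if k < m then (f (Suc k) (x + t *\<^sub>R dir s) - f (Suc k) x) / t else 0)" for s k
    have "continuous_on (ball_upto m) (\<lambda>s. F s k)" for k
    proof (cases "k < m")
      case True
      then have k: "Suc k \<in> {1..m}"
        by simp
      have "continuous_on (SS (Suc k)) (f (Suc k))"
        using SS[OF k] by blast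
      moreover have "continuous_on (ball_upto m) (\<lambda>s. x + t *\<^sub>R dir s)"
        by (intro continuous_on_add continuous_on_const continuous_on_scaleR dir(1))
      moreover have "(\<lambda>s. x + t *\<^sub>R dir s) ` ball_upto m \<subseteq> SS (Suc k)"
        using elim(2) \<rho>(2) k by (force simp: D_def)
      ultimately have "continuous_on (ball_upto m) (\<lambda>s. f (Suc k) (x + t *\<^sub>R dir s))"
        by (rule continuous_on_compose2)
      then show ?thesis
        using True elim(3) by (simp add: F_def continuous_on_divide continuous_on_diff continuous_on_const)
    qed (simp add: F_def)
    moreover have "(\<Sum>k<m. s k * F s k) > 0" if s: "s \<in> sphere_upto m" for s
    proof (rule outward_if_coercive[OF s])
      have "s \<in> ball_upto m"
        using s sphere_upto_subset_ball_upto by blast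
      then show "\<bar>F s k - dir_deriv (f (Suc k)) x (dir s)\<bar> < \<theta>"
        and "\<kappa> * (s k)\<^sup>2 \<le> s k * dir_deriv (f (Suc k)) x (dir s)" if "k < m" for k
        using elim(1) coercive(2) that by (auto simp: F_def D_def)
    qed (rule \<theta>(2))
    ultimately obtain s where s: "s \<in> ball_upto m" "\<forall>k<m. F s k = 0"
      using outward_field_has_zero[of m F] continuous_on_coordinatewise_then_product by blast
    show ?case
    proof (intro bexI ballI)
      fix i
      assume i: "i \<in> {1..m}"
      then obtain k where "i = Suc k" "k < m"
        by (cases i) auto
      then have "(f i (x + t *\<^sub>R dir s) - f i x) / t = 0"
        using s(2) by (simp add: F_def)
      then show "f i (x + t *\<^sub>R dir s) = 0"
        using elim(3) f_zero[OF i] by simp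
    qed (rule s(1))
  qed
qed

lemma supp_perturbation_le:
  assumes C: "C \<noteq> {}" "pointwise_bounded C" and \<epsilon>: "\<epsilon> \<ge> 0"
    and pq: "\<And>k. k \<in> K \<Longrightarrow> p k \<ge> 0 \<and> q k \<ge> 0"
  shows "supp C (u + \<epsilon> *\<^sub>R (\<Sum>k\<in>K. p k *\<^sub>R w k + q k *\<^sub>R v k))
     \<le> supp C u + \<epsilon> * (\<Sum>k\<in>K. p k * supp C (w k) + q k * supp C (v k))"
proof -
  have "supp C (\<Sum>k\<in>K. p k *\<^sub>R w k + q k *\<^sub>R v k) \<le> (\<Sum>k\<in>K. supp C (p k *\<^sub>R w k + q k *\<^sub>R v k))"
    by (rule supp_sum_le[OF C])
  also have "\<dots> \<le> (\<Sum>k\<in>K. p k * supp C (w k) + q k * supp C (v k))"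
    using pq supp_add_le[OF C] supp_scaleR_le[OF C] by (intro sum_mono) (smt (verit))
  finally show ?thesis
    using supp_add_le[OF C] supp_scaleR_le[OF C \<epsilon>] mult_left_mono[OF _ \<epsilon>] by (smt (verit))
qed

lemma supp_perturbation_le_single:
  assumes C: "C \<noteq> {}" "pointwise_bounded C" "supp C u \<le> 0" and \<epsilon>: "\<epsilon> \<ge> 0"
    and K: "finite K" "k0 \<in> K" and pq: "\<And>k. k \<in> K \<Longrightarrow> p k \<ge> 0 \<and> q k \<ge> 0"
    and others: "\<And>k. k \<in> K - {k0} \<Longrightarrow> supp C (w k) \<le> 0 \<and> supp C (v k) \<le> 0"
  shows "supp C (u + \<epsilon> *\<^sub>R (\<Sum>k\<in>K. p k *\<^sub>R w k + q k *\<^sub>R v k))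
     \<le> \<epsilon> * (p k0 * supp C (w k0) + q k0 * supp C (v k0))"
proof -
  have "(\<Sum>k\<in>K - {k0}. p k * supp C (w k) + q k * supp C (v k)) \<le> 0"
    using pq others by (intro sum_nonpos add_nonpos_nonpos mult_nonneg_nonpos) auto
  then have "(\<Sum>k\<in>K. p k * supp C (w k) + q k * supp C (v k)) \<le> p k0 * supp C (w k0) + q k0 * supp C (v k0)"
    using K by (simp add: sum.remove)
  moreover have "supp C (u + \<epsilon> *\<^sub>R (\<Sum>k\<in>K. p k *\<^sub>R w k + q k *\<^sub>R v k))
      \<le> supp C u + \<epsilon> * (\<Sum>k\<in>K. p k * supp C (w k) + q k * supp C (v k))"
    by (rule supp_perturbation_le) (use C \<epsilon> pq in auto)
  ultimately show ?thesis
    using C(3) mult_left_mono[OF _ \<epsilon>] by (smt (verit))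
qed

lemma supp_perturbation_le_abs:
  assumes C: "C \<noteq> {}" "pointwise_bounded C" and \<epsilon>: "\<epsilon> \<ge> 0"
    and pq: "\<And>k. k \<in> K \<Longrightarrow> p k \<in> {0..1} \<and> q k \<in> {0..1}"
  shows "supp C (u + \<epsilon> *\<^sub>R (\<Sum>k\<in>K. p k *\<^sub>R w k + q k *\<^sub>R v k))
     \<le> supp C u + \<epsilon> * (\<Sum>k\<in>K. \<bar>supp C (w k)\<bar> + \<bar>supp C (v k)\<bar>)"
proof -
  have "p * a \<le> \<bar>a\<bar>" if "p \<in> {0..1}" for p a :: real
  proof -
    have "p * a \<le> p * \<bar>a\<bar>"
      using that by (intro mult_left_mono) auto
    also have "\<dots> \<le> \<bar>a\<bar>"
      using that by (intro mult_left_le_one_le) auto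
    finally show ?thesis .
  qed
  then have "(\<Sum>k\<in>K. p k * supp C (w k) + q k * supp C (v k)) \<le> (\<Sum>k\<in>K. \<bar>supp C (w k)\<bar> + \<bar>supp C (v k)\<bar>)"
    using pq by (intro sum_mono add_mono) auto
  moreover have "supp C (u + \<epsilon> *\<^sub>R (\<Sum>k\<in>K. p k *\<^sub>R w k + q k *\<^sub>R v k))
      \<le> supp C u + \<epsilon> * (\<Sum>k\<in>K. p k * supp C (w k) + q k * supp C (v k))"
    by (rule supp_perturbation_le) (use C \<epsilon> pq in auto)
  ultimately show ?thesis
    using mult_left_mono[OF _ \<epsilon>] by (smt (verit))
qed

text \<open>The sign of \<open>s k\<close> decides whether the equality constraint \<open>Suc k\<close> is pushed up (along
  \<open>w\<close>) or down (along \<open>v\<close>), while no other constraint is pushed the wrong way.  Coordinates of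
  \<open>s\<close> start at \<open>0\<close>, constraints at \<open>1\<close>.\<close>

definition perturb :: "'a::real_normed_vector \<Rightarrow> real \<Rightarrow> (nat \<Rightarrow> 'a) \<Rightarrow> (nat \<Rightarrow> 'a) \<Rightarrow> nat \<Rightarrow> (nat \<Rightarrow> real) \<Rightarrow> 'a"
  where "perturb u \<epsilon> w v m s = u + \<epsilon> *\<^sub>R (\<Sum>k<m. max (s k) 0 *\<^sub>R w (Suc k) + max (- s k) 0 *\<^sub>R v (Suc k))"

lemma continuous_on_perturb: "continuous_on UNIV (perturb u \<epsilon> w v m)"
  unfolding perturb_def by (intro continuous_intros continuous_on_product_coordinates)

lemma perturb_minus_in_span: "perturb u \<epsilon> w v m s - u \<in> span (w ` {1..m} \<union> v ` {1..m})"
proof -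
  have "(\<Sum>k<m. max (s k) 0 *\<^sub>R w (Suc k) + max (- s k) 0 *\<^sub>R v (Suc k)) \<in> span (w ` {1..m} \<union> v ` {1..m})"
    by (intro span_sum span_add span_scale span_base) auto
  then show ?thesis
    by (simp add: perturb_def span_scale)
qed

lemma perturb_coefficients:
  "s \<in> ball_upto m \<Longrightarrow> k < m \<Longrightarrow> max (s k) 0 \<in> {0..1} \<and> max (- s k) 0 \<in> {0..1}"
  using abs_le_one_if_in_ball_upto by fastforce

lemma norm_perturb_minus_le:
  assumes "s \<in> ball_upto m" "\<epsilon> \<ge> 0"
  shows "norm (perturb u \<epsilon> w v m s - u) \<le> \<epsilon> * (\<Sum>k<m. norm (w (Suc k)) + norm (v (Suc k)))"
proof -
  have "norm (\<Sum>k<m. max (s k) 0 *\<^sub>R w (Suc k) + max (- s k) 0 *\<^sub>R v (Suc k))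
      \<le> (\<Sum>k<m. norm (w (Suc k)) + norm (v (Suc k)))"
    using perturb_coefficients[OF assms(1)]
    by (intro order.trans[OF norm_sum] sum_mono order.trans[OF norm_triangle_ineq] add_mono)
      (auto intro!: mult_left_le_one_le)
  then show ?thesis
    using assms(2) by (simp add: perturb_def mult_left_mono)
qed

lemma supp_perturb_le:
  assumes "C \<noteq> {}" "pointwise_bounded C" "s \<in> ball_upto m" "\<epsilon> \<ge> 0"
  shows "supp C (perturb u \<epsilon> w v m s) \<le> supp C u + \<epsilon> * (\<Sum>k<m. \<bar>supp C (w (Suc k))\<bar> + \<bar>supp C (v (Suc k))\<bar>)"
  unfolding perturb_def using assms perturb_coefficients by (intro supp_perturbation_le_abs) auto

lemma supp_perturb_coordinate_le:
  assumes C: "C \<noteq> {}" "pointwise_bounded C" "supp C u \<le> 0" and s: "s \<in> ball_upto m" and k: "k < m"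
    and \<epsilon>: "\<epsilon> \<ge> 0" and others: "\<And>k'. k' < m \<Longrightarrow> k' \<noteq> k \<Longrightarrow> supp C (w (Suc k')) \<le> 0 \<and> supp C (v (Suc k')) \<le> 0"
  shows "supp C (perturb u \<epsilon> w v m s) \<le> \<epsilon> * (max (s k) 0 * supp C (w (Suc k)) + max (- s k) 0 * supp C (v (Suc k)))"
  unfolding perturb_def using C \<epsilon> k others by (intro supp_perturbation_le_single) auto

lemma finite_uniform_negative_bound:
  fixes a :: "'i \<Rightarrow> real"
  assumes "finite J" "\<And>j. j \<in> J \<Longrightarrow> a j < 0"
  obtains \<gamma> where "\<gamma> > 0" "\<And>j. j \<in> J \<Longrightarrow> a j \<le> - \<gamma>"
proof
  show "Min (insert 1 ((\<lambda>j. - a j) ` J)) > 0"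
    using assms by (simp add: Min_gr_iff)
  show "a j \<le> - Min (insert 1 ((\<lambda>j. - a j) ` J))" if "j \<in> J" for j
  proof -
    have "Min (insert 1 ((\<lambda>j. - a j) ` J)) \<le> - a j"
      by (rule Min_le) (use assms(1) that in auto)
    then show ?thesis
      by linarith
  qed
qed

lemma small_positive_factor:
  fixes A B \<eta> \<gamma> :: real
  assumes "A \<ge> 0" "B \<ge> 0" "\<eta> > 0" "\<gamma> > 0"
  obtains \<epsilon> where "\<epsilon> > 0" "\<epsilon> * A < \<eta>" "\<epsilon> * B < \<gamma>"
proof
  define \<epsilon> where "\<epsilon> = min (\<eta> / (A + 1)) (\<gamma> / (B + 1))"
  show "\<epsilon> > 0"
    using assms by (simp add: \<epsilon>_def)
  have "\<epsilon> * A \<le> \<eta> / (A + 1) * A" "\<epsilon> * B \<le> \<gamma> / (B + 1) * B"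
    using assms by (intro mult_right_mono; simp add: \<epsilon>_def)+
  moreover have "\<eta> / (A + 1) * A < \<eta>" "\<gamma> / (B + 1) * B < \<gamma>"
    using assms by (simp_all add: field_simps)
  ultimately show "\<epsilon> * A < \<eta>" "\<epsilon> * B < \<gamma>"
    by linarith+
qed

lemma perturbed_direction:
  fixes Cp Cm :: "nat \<Rightarrow> ('a::real_normed_vector \<Rightarrow>\<^sub>L real) set" and Pg :: "'j \<Rightarrow> ('a \<Rightarrow>\<^sub>L real) set"
  assumes C: "\<And>i. i \<in> {1..m} \<Longrightarrow> Cp i \<noteq> {} \<and> Cm i \<noteq> {} \<and> pointwise_bounded (Cp i) \<and> pointwise_bounded (Cm i)"
    and v: "\<And>i. i \<in> {1..m} \<Longrightarrow> supp (Cp i) (v i) < 0 \<and>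
      (\<forall>k\<in>{1..m} - {i}. supp (Cp k) (v i) \<le> 0 \<and> supp (Cm k) (v i) \<le> 0)"
    and w: "\<And>i. i \<in> {1..m} \<Longrightarrow> supp (Cm i) (w i) < 0 \<and>
      (\<forall>k\<in>{1..m} - {i}. supp (Cm k) (w i) \<le> 0 \<and> supp (Cp k) (w i) \<le> 0)"
    and u: "\<And>i. i \<in> {1..m} \<Longrightarrow> supp (Cp i) u \<le> 0 \<and> supp (Cm i) u \<le> 0"
    and Pg: "finite J" "\<And>j. j \<in> J \<Longrightarrow> Pg j \<noteq> {} \<and> pointwise_bounded (Pg j) \<and> supp (Pg j) u < 0"
    and \<eta>: "\<eta> > 0"
  obtains \<epsilon> \<kappa> \<gamma> where "\<epsilon> > 0" "\<And>s. s \<in> ball_upto m \<Longrightarrow> norm (perturb u \<epsilon> w v m s - u) < \<eta>"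
    "\<kappa> > 0" "\<And>s k. s \<in> ball_upto m \<Longrightarrow> k < m \<Longrightarrow> 0 \<le> s k \<Longrightarrow> supp (Cm (Suc k)) (perturb u \<epsilon> w v m s) \<le> - \<kappa> * s k"
    "\<And>s k. s \<in> ball_upto m \<Longrightarrow> k < m \<Longrightarrow> s k \<le> 0 \<Longrightarrow> supp (Cp (Suc k)) (perturb u \<epsilon> w v m s) \<le> \<kappa> * s k"
    "\<gamma> > 0" "\<And>s j. s \<in> ball_upto m \<Longrightarrow> j \<in> J \<Longrightarrow> supp (Pg j) (perturb u \<epsilon> w v m s) \<le> - \<gamma>"
proof -
  define MW where "MW = (\<Sum>k<m. norm (w (Suc k)) + norm (v (Suc k)))"
  define Mg where "Mg j = (\<Sum>k<m. \<bar>supp (Pg j) (w (Suc k))\<bar> + \<bar>supp (Pg j) (v (Suc k))\<bar>)" for j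
  have MW: "MW \<ge> 0" and Mg: "\<And>j. Mg j \<ge> 0"
    by (auto simp: MW_def Mg_def intro: sum_nonneg)
  obtain \<gamma> where \<gamma>: "\<gamma> > 0" "\<And>j. j \<in> J \<Longrightarrow> supp (Pg j) u \<le> - \<gamma>"
    using finite_uniform_negative_bound[of J "\<lambda>j. supp (Pg j) u"] Pg by blast
  have "max (supp (Cp (Suc k)) (v (Suc k))) (supp (Cm (Suc k)) (w (Suc k))) < 0" if "k \<in> {..<m}" for k
    using v[of "Suc k"] w[of "Suc k"] that by auto
  then obtain \<kappa> where \<kappa>: "\<kappa> > 0"
    "\<And>k. k \<in> {..<m} \<Longrightarrow> max (supp (Cp (Suc k)) (v (Suc k))) (supp (Cm (Suc k)) (w (Suc k))) \<le> - \<kappa>"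
    using finite_uniform_negative_bound[of "{..<m}" "\<lambda>k. max (supp (Cp (Suc k)) (v (Suc k))) (supp (Cm (Suc k)) (w (Suc k)))"]
    by blast
  obtain \<epsilon> where \<epsilon>: "\<epsilon> > 0" "\<epsilon> * MW < \<eta>" "\<epsilon> * sum Mg J < \<gamma> / 2"
    using small_positive_factor[of MW "sum Mg J" \<eta> "\<gamma> / 2"] MW Mg \<eta> \<gamma>(1) by (auto intro: sum_nonneg)
  have Mg_le: "Mg j \<le> sum Mg J" if "j \<in> J" for j
    using Pg(1) Mg that by (intro member_le_sum) auto
  have others: "supp (C (Suc k)) (w (Suc k')) \<le> 0 \<and> supp (C (Suc k)) (v (Suc k')) \<le> 0"
    if "C = Cp \<or> C = Cm" "k < m" "k' < m" "k' \<noteq> k" for C k k'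
    using that v[of "Suc k'"] w[of "Suc k'"] by auto
  show ?thesis
  proof (rule that[OF \<epsilon>(1) _ mult_pos_pos[OF \<epsilon>(1) \<kappa>(1)] _ _ half_gt_zero[OF \<gamma>(1)]])
    show "norm (perturb u \<epsilon> w v m s - u) < \<eta>" if "s \<in> ball_upto m" for s
      using norm_perturb_minus_le[OF that, of \<epsilon> u w v] \<epsilon> by (simp add: MW_def)
    show "supp (Cm (Suc k)) (perturb u \<epsilon> w v m s) \<le> - (\<epsilon> * \<kappa>) * s k"
      if s: "s \<in> ball_upto m" and k: "k < m" "0 \<le> s k" for s k
    proof -
      have "supp (Cm (Suc k)) (perturb u \<epsilon> w v m s)
          \<le> \<epsilon> * (max (s k) 0 * supp (Cm (Suc k)) (w (Suc k)) + max (- s k) 0 * supp (Cm (Suc k)) (v (Suc k)))"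
        using C[of "Suc k"] u[of "Suc k"] k others[of Cm k] \<epsilon>(1)
        by (intro supp_perturb_coordinate_le[OF _ _ _ s k(1)]) auto
      also have "\<dots> = \<epsilon> * (s k * supp (Cm (Suc k)) (w (Suc k)))"
        using k by simp
      also have "\<dots> \<le> \<epsilon> * (s k * - \<kappa>)"
        using k \<kappa>(2)[of k] \<epsilon>(1) by (intro mult_left_mono) (auto simp: max_def split: if_splits)
      finally show ?thesis
        by (simp add: mult_ac)
    qed
    show "supp (Cp (Suc k)) (perturb u \<epsilon> w v m s) \<le> \<epsilon> * \<kappa> * s k"
      if s: "s \<in> ball_upto m" and k: "k < m" "s k \<le> 0" for s k
    proof -
      have "supp (Cp (Suc k)) (perturb u \<epsilon> w v m s)
          \<le> \<epsilon> * (max (s k) 0 * supp (Cp (Suc k)) (w (Suc k)) + max (- s k) 0 * supp (Cp (Suc k)) (v (Suc k)))"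
        using C[of "Suc k"] u[of "Suc k"] k others[of Cp k] \<epsilon>(1)
        by (intro supp_perturb_coordinate_le[OF _ _ _ s k(1)]) auto
      also have "\<dots> = \<epsilon> * (- s k * supp (Cp (Suc k)) (v (Suc k)))"
        using k by simp
      also have "\<dots> \<le> \<epsilon> * (- s k * - \<kappa>)"
        using k \<kappa>(2)[of k] \<epsilon>(1) by (intro mult_left_mono) (auto simp: max_def split: if_splits)
      finally show ?thesis
        by (simp add: mult_ac)
    qed
    show "supp (Pg j) (perturb u \<epsilon> w v m s) \<le> - (\<gamma> / 2)" if s: "s \<in> ball_upto m" and j: "j \<in> J" for s j
    proof -
      have "\<epsilon> * Mg j \<le> \<epsilon> * sum Mg J"
        using \<epsilon>(1) Mg_le[OF j] by (intro mult_left_mono) auto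
      then have "\<epsilon> * Mg j \<le> \<gamma> / 2"
        using \<epsilon>(3) by linarith
      then show ?thesis
        using supp_perturb_le[of "Pg j" s m \<epsilon> u w v] Pg(2)[OF j] s \<epsilon>(1) \<gamma>(2)[OF j] by (simp add: Mg_def)
    qed
  qed
qed

locale qd_constraints =
  fixes f g :: "nat \<Rightarrow> 'a::real_normed_vector \<Rightarrow> real" and m l :: nat and xb :: 'a
    and Cp Cm Pg :: "nat \<Rightarrow> ('a \<Rightarrow>\<^sub>L real) set" and Jx :: "nat set"
  assumes active_subset: "Jx \<subseteq> {1..l}"
    and f_cont: "\<And>i. i \<in> {1..m} \<Longrightarrow> \<exists>S. open S \<and> xb \<in> S \<and> continuous_on S (f i)"
    and f_unif: "\<And>i. i \<in> {1..m} \<Longrightarrow> unif_dir_diff (f i) xb"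
    and f_zero: "\<And>i. i \<in> {1..m} \<Longrightarrow> f i xb = 0"
    and C: "\<And>i. i \<in> {1..m} \<Longrightarrow> Cp i \<noteq> {} \<and> Cm i \<noteq> {} \<and> pointwise_bounded (Cp i) \<and> pointwise_bounded (Cm i)"
    and f_upper: "\<And>i d. i \<in> {1..m} \<Longrightarrow> dir_deriv (f i) xb d \<le> supp (Cp i) d"
    and f_lower: "\<And>i d. i \<in> {1..m} \<Longrightarrow> - supp (Cm i) d \<le> dir_deriv (f i) xb d"
    and up_direction: "\<And>i. i \<in> {1..m} \<Longrightarrow> \<exists>v. supp (Cp i) v < 0 \<and>
      (\<forall>k\<in>{1..m} - {i}. supp (Cp k) v \<le> 0 \<and> supp (Cm k) v \<le> 0)"
    and down_direction: "\<And>i. i \<in> {1..m} \<Longrightarrow> \<exists>w. supp (Cm i) w < 0 \<and>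
      (\<forall>k\<in>{1..m} - {i}. supp (Cm k) w \<le> 0 \<and> supp (Cp k) w \<le> 0)"
    and g_unif: "\<And>j. j \<in> Jx \<Longrightarrow> unif_dir_diff (g j) xb"
    and g_active: "\<And>j. j \<in> Jx \<Longrightarrow> g j xb = 0"
    and Pg: "\<And>j. j \<in> Jx \<Longrightarrow> Pg j \<noteq> {} \<and> pointwise_bounded (Pg j)"
    and g_upper: "\<And>j d. j \<in> Jx \<Longrightarrow> dir_deriv (g j) xb d \<le> supp (Pg j) d"
    and g_inactive: "\<And>j. j \<in> {1..l} - Jx \<Longrightarrow> usc_at (g j) xb \<and> g j xb < 0"
begin

lemma feasible_points_near_direction:
  assumes u: "\<And>i. i \<in> {1..m} \<Longrightarrow> supp (Cp i) u \<le> 0 \<and> supp (Cm i) u \<le> 0"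
      "\<And>j. j \<in> Jx \<Longrightarrow> supp (Pg j) u < 0"
    and \<eta>: "\<eta> > 0"
  obtains t w where "0 < t" "t < \<eta>" "norm (w - u) < \<eta>"
    "\<forall>i\<in>{1..m}. f i (xb + t *\<^sub>R w) = 0" "\<forall>j\<in>{1..l}. g j (xb + t *\<^sub>R w) \<le> 0"
proof -
  have J: "finite Jx"
    using active_subset finite_subset by blast
  obtain v w where v: "\<And>i. i \<in> {1..m} \<Longrightarrow> supp (Cp i) (v i) < 0 \<and>
      (\<forall>k\<in>{1..m} - {i}. supp (Cp k) (v i) \<le> 0 \<and> supp (Cm k) (v i) \<le> 0)"
    and w: "\<And>i. i \<in> {1..m} \<Longrightarrow> supp (Cm i) (w i) < 0 \<and>
      (\<forall>k\<in>{1..m} - {i}. supp (Cm k) (w i) \<le> 0 \<and> supp (Cp k) (w i) \<le> 0)"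
    using up_direction down_direction by metis
  obtain \<epsilon> \<kappa> \<gamma> where "\<epsilon> > 0" and near: "\<And>s. s \<in> ball_upto m \<Longrightarrow> norm (perturb u \<epsilon> w v m s - u) < \<eta>"
    and \<kappa>: "\<kappa> > 0" "\<And>s k. s \<in> ball_upto m \<Longrightarrow> k < m \<Longrightarrow> 0 \<le> s k \<Longrightarrow> supp (Cm (Suc k)) (perturb u \<epsilon> w v m s) \<le> - \<kappa> * s k"
    "\<And>s k. s \<in> ball_upto m \<Longrightarrow> k < m \<Longrightarrow> s k \<le> 0 \<Longrightarrow> supp (Cp (Suc k)) (perturb u \<epsilon> w v m s) \<le> \<kappa> * s k"
    and \<gamma>: "\<gamma> > 0" "\<And>s j. s \<in> ball_upto m \<Longrightarrow> j \<in> Jx \<Longrightarrow> supp (Pg j) (perturb u \<epsilon> w v m s) \<le> - \<gamma>"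
    by (rule perturbed_direction[of m Cp Cm v w u Jx Pg \<eta>]) (use C v w u Pg J \<eta> in auto)
  define dir where "dir = perturb u \<epsilon> w v m"
  have dir: "continuous_on UNIV dir" "\<And>s. dir s - u \<in> span (w ` {1..m} \<union> v ` {1..m})"
    "\<And>s. s \<in> ball_upto m \<Longrightarrow> norm (dir s - u) < \<eta>"
    unfolding dir_def using continuous_on_perturb perturb_minus_in_span near by blast+
  have coercive: "\<kappa> * (s k)\<^sup>2 \<le> s k * dir_deriv (f (Suc k)) xb (dir s)"
    if "s \<in> ball_upto m" "k < m" for s k
  proof (cases "0 \<le> s k")
    case True
    have "\<kappa> * s k \<le> dir_deriv (f (Suc k)) xb (dir s)"
      using \<kappa>(2)[OF that True] f_lower[of "Suc k" "dir s"] that(2) by (simp add: dir_def)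
    from mult_left_mono[OF this True] show ?thesis
      by (simp add: power2_eq_square mult_ac)
  next
    case False
    then have "dir_deriv (f (Suc k)) xb (dir s) \<le> \<kappa> * s k"
      using \<kappa>(3)[OF that] f_upper[of "Suc k" "dir s"] that(2) by (simp add: dir_def)
    from mult_left_mono_neg[OF this, of "s k"] False show ?thesis
      by (simp add: power2_eq_square mult_ac)
  qed
  define D where "D = dir ` ball_upto m"
  have D: "compact D" "\<And>d. d \<in> D \<Longrightarrow> d - u \<in> span (w ` {1..m} \<union> v ` {1..m})"
    unfolding D_def using dir(2) compact_continuous_image[OF continuous_on_subset[OF dir(1)] compact_ball_upto]
    by auto
  have "\<forall>\<^sub>F t in at_right 0. \<exists>s\<in>ball_upto m. \<forall>i\<in>{1..m}. f i (xb + t *\<^sub>R dir s) = 0"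
    by (rule eventually_common_zero_along_ball[OF f_cont f_unif f_zero
          continuous_on_subset[OF dir(1)] _ dir(2) \<kappa>(1) coercive]) auto
  moreover have "\<forall>\<^sub>F t in at_right 0. \<forall>j\<in>Jx. \<forall>d\<in>D. g j (xb + t *\<^sub>R d) < 0"
  proof (rule eventually_ball_finite[OF J], rule ballI)
    fix j
    assume j: "j \<in> Jx"
    show "\<forall>\<^sub>F t in at_right 0. \<forall>d\<in>D. g j (xb + t *\<^sub>R d) < 0"
    proof (rule unif_dir_diff_eventually_neg[OF g_unif[OF j] g_active[OF j] D(1) _ D(2) \<gamma>(1)])
      show "dir_deriv (g j) xb d \<le> - \<gamma>" if "d \<in> D" for d
        using that \<gamma>(2) g_upper[OF j, of d] j by (force simp: D_def dir_def)
    qed simp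
  qed
  moreover have "\<forall>\<^sub>F t in at_right 0. \<forall>j\<in>{1..l} - Jx. \<forall>d\<in>D. g j (xb + t *\<^sub>R d) < 0"
    using g_inactive compact_imp_bounded[OF D(1)]
    by (intro eventually_ball_finite ballI usc_eventually_neg) auto
  ultimately have "\<forall>\<^sub>F t in at_right 0. t \<in> {0<..<\<eta>} \<and>
      (\<exists>s\<in>ball_upto m. \<forall>i\<in>{1..m}. f i (xb + t *\<^sub>R dir s) = 0) \<and> (\<forall>j\<in>{1..l}. \<forall>d\<in>D. g j (xb + t *\<^sub>R d) < 0)"
    using eventually_at_right_real[OF \<eta>] by eventually_elim blast
  then obtain t where t: "t \<in> {0<..<\<eta>}" and "\<exists>s\<in>ball_upto m. \<forall>i\<in>{1..m}. f i (xb + t *\<^sub>R dir s) = 0"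
    and g_neg: "\<forall>j\<in>{1..l}. \<forall>d\<in>D. g j (xb + t *\<^sub>R d) < 0"
    using eventually_happens'[OF trivial_limit_at_right_real] by blast
  then obtain s where "s \<in> ball_upto m" "\<forall>i\<in>{1..m}. f i (xb + t *\<^sub>R dir s) = 0"
    by blast
  then show ?thesis
    using that[of t "dir s"] t dir(3) g_neg by (force simp: D_def)
qed

lemma no_descent_at_local_min:
  assumes opt: "loc_opt f0 f m g l xb"
    and f0: "hadamard_dir_diff f0 xb" "dir_diff f0 xb" "dir_deriv f0 xb u < 0"
    and u: "\<And>i. i \<in> {1..m} \<Longrightarrow> supp (Cp i) u \<le> 0 \<and> supp (Cm i) u \<le> 0"
      "\<And>j. j \<in> Jx \<Longrightarrow> supp (Pg j) u < 0"
  shows False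
proof -
  obtain r where r: "r > 0"
    "\<And>x. dist x xb < r \<Longrightarrow> \<forall>i\<in>{1..m}. f i x = 0 \<Longrightarrow> \<forall>j\<in>{1..l}. g j x \<le> 0 \<Longrightarrow> f0 xb \<le> f0 x"
    using opt unfolding loc_opt_def by blast
  obtain \<eta> where \<eta>: "\<eta> > 0" "\<And>t w. 0 < t \<Longrightarrow> t < \<eta> \<Longrightarrow> norm (w - u) < \<eta> \<Longrightarrow> f0 (xb + t *\<^sub>R w) < f0 xb"
    using hadamard_descent[OF f0] by blast
  define \<eta>' where "\<eta>' = min \<eta> (min 1 (r / (norm u + 1)))"
  have "\<eta>' > 0"
    using \<eta>(1) r(1) by (simp add: \<eta>'_def add_nonneg_pos)
  then obtain t w where tw: "0 < t" "t < \<eta>'" "norm (w - u) < \<eta>'"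
    "\<forall>i\<in>{1..m}. f i (xb + t *\<^sub>R w) = 0" "\<forall>j\<in>{1..l}. g j (xb + t *\<^sub>R w) \<le> 0"
    using feasible_points_near_direction[OF u] by blast
  have "norm w \<le> norm u + norm (w - u)"
    by (metis add.commute diff_add_cancel norm_triangle_ineq)
  then have "t * norm w \<le> t * (norm u + 1)"
    using tw(1,3) by (intro mult_left_mono) (auto simp: \<eta>'_def)
  also have "\<dots> < r"
    using tw(2) pos_less_divide_eq[of "norm u + 1" t r] by (simp add: \<eta>'_def add_nonneg_pos)
  finally have "f0 xb \<le> f0 (xb + t *\<^sub>R w)"
    using r(2) tw(1,4,5) by (simp add: dist_norm)
  moreover have "f0 (xb + t *\<^sub>R w) < f0 xb"
    using \<eta>(2) tw(1-3) by (simp add: \<eta>'_def)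
  ultimately show False
    by simp
qed

end

locale qd_program = qd_constraints f g m l xb Cp Cm Pg Jx
  for f g :: "nat \<Rightarrow> 'a::real_normed_vector \<Rightarrow> real" and m l :: nat and xb :: 'a
    and Cp Cm Pg :: "nat \<Rightarrow> ('a \<Rightarrow>\<^sub>L real) set" and Jx :: "nat set" +
  fixes f0 :: "'a \<Rightarrow> real" and P0 :: "('a \<Rightarrow>\<^sub>L real) set"
  assumes opt: "loc_opt f0 f m g l xb"
    and f0_diff: "hadamard_dir_diff f0 xb" "dir_diff f0 xb"
    and f0_upper: "\<And>d. dir_deriv f0 xb d \<le> supp P0 d"
    and P0: "convex P0 \<and> P0 \<noteq> {} \<and> compactin weak_star P0"
    and Pg_compact: "\<And>j. j \<in> Jx \<Longrightarrow> convex (Pg j) \<and> compactin weak_star (Pg j)"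
    and slater: "\<exists>v0. (\<forall>j\<in>Jx. supp (Pg j) v0 < 0) \<and> (\<forall>i\<in>{1..m}. supp (Cp i) v0 \<le> 0 \<and> supp (Cm i) v0 \<le> 0)"
begin

definition constraint_cone where "constraint_cone = cone_fam ((\<lambda>i. Cp i \<union> Cm i) ` {1..m})"

lemma constraint_cone_convex_cone:
  "0 \<in> constraint_cone"
  "\<And>a b. a \<in> constraint_cone \<Longrightarrow> b \<in> constraint_cone \<Longrightarrow> a + b \<in> constraint_cone"
  "\<And>c a. 0 \<le> c \<Longrightarrow> a \<in> constraint_cone \<Longrightarrow> c *\<^sub>R a \<in> constraint_cone"
  unfolding constraint_cone_def by (auto intro: cone_fam_zero cone_fam_add cone_fam_scaleR)

lemma constraint_cone_nonpos_iff:
  "(\<forall>a\<in>constraint_cone. blinfun_apply a w \<le> 0) \<longleftrightarrow> (\<forall>i\<in>{1..m}. supp (Cp i) w \<le> 0 \<and> supp (Cm i) w \<le> 0)"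
proof
  assume cone_le: "\<forall>a\<in>constraint_cone. blinfun_apply a w \<le> 0"
  have "Cp i \<subseteq> constraint_cone" "Cm i \<subseteq> constraint_cone" if "i \<in> {1..m}" for i
    using that unfolding constraint_cone_def by (auto intro: cone_fam_mem[of _ "Cp i \<union> Cm i"])
  then show "\<forall>i\<in>{1..m}. supp (Cp i) w \<le> 0 \<and> supp (Cm i) w \<le> 0"
    using C cone_le by (meson subsetD supp_least)
next
  assume "\<forall>i\<in>{1..m}. supp (Cp i) w \<le> 0 \<and> supp (Cm i) w \<le> 0"
  then have "blinfun_apply u w \<le> 0" if u: "u \<in> \<Union>((\<lambda>i. Cp i \<union> Cm i) ` {1..m})" for u
  proof -
    obtain i where i: "i \<in> {1..m}" "u \<in> Cp i \<union> Cm i"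
      using u by blast
    then show ?thesis
      using C[OF i(1)] supp_upper[of "Cp i" u w] supp_upper[of "Cm i" u w] \<open>\<forall>i\<in>{1..m}. _\<close> by fastforce
  qed
  then show "\<forall>a\<in>constraint_cone. blinfun_apply a w \<le> 0"
    unfolding constraint_cone_def using cone_fam_halfspace by blast
qed

lemma multiplier_rule:
  obtains lam p0 p c where "p0 \<in> P0" "\<forall>j\<in>Jx. lam j \<ge> 0 \<and> p j \<in> Pg j" "c \<in> wstar_closure constraint_cone"
    "p0 + (\<Sum>j\<in>Jx. lam j *\<^sub>R p j) + c = 0"
proof -
  define P where "P j = (if j = 0 then P0 else Pg j)" for j
  have J: "finite (insert 0 Jx)" "0 \<notin> Jx"
    using active_subset by (auto intro: finite_subset)
  obtain v0 where v0: "\<forall>j\<in>Jx. supp (Pg j) v0 < 0" "\<forall>a\<in>constraint_cone. blinfun_apply a v0 \<le> 0"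
    using slater constraint_cone_nonpos_iff by blast
  obtain lam p c where lam: "\<forall>j\<in>insert 0 Jx. lam j \<ge> 0" "lam 0 = 1" and p: "\<forall>j\<in>insert 0 Jx. p j \<in> P j"
    and c: "c \<in> wstar_closure constraint_cone" and zero: "(\<Sum>j\<in>insert 0 Jx. lam j *\<^sub>R p j) + c = 0"
  proof (rule wstar_multiplier_rule[of "insert 0 Jx" 0 P constraint_cone v0])
    fix w
    assume w: "\<forall>a\<in>constraint_cone. blinfun_apply a w \<le> 0" "\<forall>j\<in>insert 0 Jx. supp (P j) w < 0"
    show False
    proof (rule no_descent_at_local_min[OF opt f0_diff])
      show "dir_deriv f0 xb w < 0"
        using f0_upper[of w] w(2) by (simp add: P_def)
      show "supp (Cp i) w \<le> 0 \<and> supp (Cm i) w \<le> 0" if "i \<in> {1..m}" for i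
        using w(1) that constraint_cone_nonpos_iff by blast
      show "supp (Pg j) w < 0" if "j \<in> Jx" for j
        using w(2) that J(2) unfolding P_def by (metis insertCI)
    qed
  qed (use J(1) P0 Pg Pg_compact constraint_cone_convex_cone v0 in \<open>auto simp: P_def\<close>)
  show ?thesis
  proof (rule that[of "p 0" lam p c])
    show "p 0 + (\<Sum>j\<in>Jx. lam j *\<^sub>R p j) + c = 0"
      using zero lam(2) J by simp
  qed (use p lam(1) c J in \<open>auto simp: P_def split: if_splits\<close>)
qed

end

lemma multipliers_normal_form:
  fixes p :: "nat \<Rightarrow> 'b::real_vector"
  assumes Jx: "Jx \<subseteq> {1..l}" and Lg: "\<forall>j\<in>{1..l}. Lg j \<noteq> {}"
    and p: "p0 \<in> (\<lambda>a. a + y0) ` L0" "\<forall>j\<in>Jx. lam j \<ge> 0 \<and> p j \<in> (\<lambda>a. a + z j) ` Lg j"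
    and zero: "p0 + (\<Sum>j\<in>Jx. lam j *\<^sub>R p j) + c = 0"
  shows "\<exists>lam'. (\<forall>j\<in>{1..l}. lam' j \<ge> 0 \<and> (j \<notin> Jx \<longrightarrow> lam' j = 0)) \<and>
    (\<exists>a\<in>L0. \<exists>b. (\<forall>j\<in>{1..l}. b j \<in> Lg j) \<and> 0 = a + y0 + (\<Sum>j\<in>{1..l}. lam' j *\<^sub>R (b j + z j)) + c)"
proof -
  define lam' where "lam' j = (if j \<in> Jx then lam j else 0)" for j
  define b where "b j = (if j \<in> Jx then p j - z j else (SOME q. q \<in> Lg j))" for j
  have "(\<Sum>j\<in>{1..l}. lam' j *\<^sub>R (b j + z j)) = (\<Sum>j\<in>Jx. lam j *\<^sub>R p j)"
    using Jx by (intro sum.mono_neutral_cong_right) (auto simp: lam'_def b_def)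
  then have sum_eq: "0 = (p0 - y0) + y0 + (\<Sum>j\<in>{1..l}. lam' j *\<^sub>R (b j + z j)) + c"
    using zero by simp
  show ?thesis
  proof (intro exI[of _ lam'] conjI bexI[of _ "p0 - y0"] exI[of _ b])
    show "\<forall>j\<in>{1..l}. 0 \<le> lam' j \<and> (j \<notin> Jx \<longrightarrow> lam' j = 0)"
      using p(2) by (simp add: lam'_def)
    show "\<forall>j\<in>{1..l}. b j \<in> Lg j"
      using p(2) Lg by (auto simp: b_def some_in_eq)
    show "p0 - y0 \<in> L0"
      using p(1) by auto
  qed (rule sum_eq)
qed

theorem theorem2:
  fixes f0 :: "'a::banach \<Rightarrow> real" and f g :: "nat \<Rightarrow> 'a \<Rightarrow> real" and m l :: nat and xb :: 'a
    and L0 U0 :: "('a \<Rightarrow>\<^sub>L real) set" and Lf Uf Lg Ug :: "nat \<Rightarrow> ('a \<Rightarrow>\<^sub>L real) set"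
    and xs ys z :: "nat \<Rightarrow> ('a \<Rightarrow>\<^sub>L real)" and y0 :: "'a \<Rightarrow>\<^sub>L real"
  defines "Jx \<equiv> {j\<in>{1..l}. g j xb = 0}"
  assumes opt: "loc_opt f0 f m g l xb"
    and h1: "quasidiff f0 xb L0 U0" "hadamard_dir_diff f0 xb"
    and h2: "\<forall>i\<in>{1..m}. (\<exists>S. open S \<and> xb \<in> S \<and> continuous_on S (f i)) \<and> unif_quasidiff (f i) xb (Lf i) (Uf i)"
    and h3a: "\<forall>j\<in>{1..l} - Jx. usc_at (g j) xb \<and> quasidiff (g j) xb (Lg j) (Ug j)"
    and h3b: "\<forall>j\<in>Jx. unif_quasidiff (g j) xb (Lg j) (Ug j)"
    and hx: "\<forall>i\<in>{1..m}. xs i \<in> Lf i \<and> ys i \<in> Uf i"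
    and hz: "\<forall>j\<in>Jx. z j \<in> Ug j"
    and c1: "\<forall>i\<in>{1..m}. \<exists>v. supp ((\<lambda>a. a + ys i) ` Lf i) v < 0 \<and>
               (\<forall>k\<in>{1..m} - {i}. supp ((\<lambda>a. a + ys k) ` Lf k) v \<le> 0 \<and> supp ((\<lambda>b. - xs k - b) ` Uf k) v \<le> 0)"
    and c2: "\<forall>i\<in>{1..m}. \<exists>w. supp ((\<lambda>b. - xs i - b) ` Uf i) w < 0 \<and>
               (\<forall>k\<in>{1..m} - {i}. supp ((\<lambda>b. - xs k - b) ` Uf k) w \<le> 0 \<and> supp ((\<lambda>a. a + ys k) ` Lf k) w \<le> 0)"
    and c3: "\<exists>v0. (\<forall>j\<in>Jx. supp ((\<lambda>a. a + z j) ` Lg j) v0 < 0) \<and>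
               (\<forall>i\<in>{1..m}. supp ((\<lambda>a. a + ys i) ` Lf i) v0 \<le> 0 \<and> supp ((\<lambda>b. - xs i - b) ` Uf i) v0 \<le> 0)"
    and hy0: "y0 \<in> U0"
    and hzi: "\<forall>j\<in>{1..l} - Jx. z j \<in> Ug j"
  shows "\<exists>lam::nat \<Rightarrow> real. (\<forall>j\<in>{1..l}. lam j \<ge> 0 \<and> lam j * g j xb = 0) \<and>
    (\<exists>a\<in>L0. \<exists>b. (\<forall>j\<in>{1..l}. b j \<in> Lg j) \<and>
      (\<exists>c\<in>wstar_closure (cone_fam ((\<lambda>i. ((\<lambda>a. a + ys i) ` Lf i) \<union> ((\<lambda>b. - xs i - b) ` Uf i)) ` {1..m})).
        0 = a + y0 + (\<Sum>j\<in>{1..l}. lam j *\<^sub>R (b j + z j)) + c))"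
proof -
  define Cp where "Cp i = (\<lambda>a. a + ys i) ` Lf i" for i
  define Cm where "Cm i = (\<lambda>b. - xs i - b) ` Uf i" for i
  define Pg where "Pg j = (\<lambda>a. a + z j) ` Lg j" for j
  have Jx: "Jx \<subseteq> {1..l}"
    by (auto simp: Jx_def)
  have qd_f: "quasidiff (f i) xb (Lf i) (Uf i)" if "i \<in> {1..m}" for i
    using h2 that by (simp add: unif_quasidiff_def)
  have qd_g: "quasidiff (g j) xb (Lg j) (Ug j)" if "j \<in> {1..l}" for j
    using h3a h3b that by (cases "j \<in> Jx") (auto simp: unif_quasidiff_def)
  have translation: "convex ((\<lambda>a. a + y) ` L) \<and> (\<lambda>a. a + y) ` L \<noteq> {} \<and> compactin weak_star ((\<lambda>a. a + y) ` L)"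
    if "quasidiff h xb L U" for h L U y
    using that convex_translation_subtract[of L "- y"]
    by (auto simp: quasidiff_def intro: compactin_weak_star_translation)
  have fxb: "\<forall>i\<in>{1..m}. f i xb = 0" and gxb: "\<forall>j\<in>{1..l}. g j xb \<le> 0"
    using opt by (auto simp: loc_opt_def)
  interpret qd_program f g m l xb Cp Cm Pg Jx f0 "(\<lambda>a. a + y0) ` L0"
  proof
    show "Jx \<subseteq> {1..l}"
      by (rule Jx)
    show "\<exists>S. open S \<and> xb \<in> S \<and> continuous_on S (f i)" "unif_dir_diff (f i) xb" "f i xb = 0"
      if "i \<in> {1..m}" for i
      using h2 fxb that by (auto simp: unif_quasidiff_def)
    show "Cp i \<noteq> {} \<and> Cm i \<noteq> {} \<and> pointwise_bounded (Cp i) \<and> pointwise_bounded (Cm i)"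
      if "i \<in> {1..m}" for i
      using qd_f[OF that] quasidiff_pointwise_bounded[OF qd_f[OF that]] unfolding Cp_def Cm_def
      by (auto simp: quasidiff_def intro: pointwise_bounded_translation pointwise_bounded_reflection)
    show "dir_deriv (f i) xb d \<le> supp (Cp i) d" "- supp (Cm i) d \<le> dir_deriv (f i) xb d"
      if "i \<in> {1..m}" for i d
      using hx that unfolding Cp_def Cm_def
      by (auto intro: quasidiff_dir_deriv_le_supp[OF qd_f] quasidiff_neg_supp_le_dir_deriv[OF qd_f])
    show "\<exists>v. supp (Cp i) v < 0 \<and> (\<forall>k\<in>{1..m} - {i}. supp (Cp k) v \<le> 0 \<and> supp (Cm k) v \<le> 0)"
      "\<exists>w. supp (Cm i) w < 0 \<and> (\<forall>k\<in>{1..m} - {i}. supp (Cm k) w \<le> 0 \<and> supp (Cp k) w \<le> 0)"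
      if "i \<in> {1..m}" for i
      using c1 c2 that unfolding Cp_def Cm_def by auto
    show "unif_dir_diff (g j) xb" "g j xb = 0" if "j \<in> Jx" for j
      using h3b that by (auto simp: unif_quasidiff_def Jx_def)
    show "Pg j \<noteq> {} \<and> pointwise_bounded (Pg j)" "convex (Pg j) \<and> compactin weak_star (Pg j)"
      if "j \<in> Jx" for j
      using translation[OF qd_g[OF subsetD[OF Jx that]], of "z j"] pointwise_bounded_if_compactin
      unfolding Pg_def by auto
    show "dir_deriv (g j) xb d \<le> supp (Pg j) d" if "j \<in> Jx" for j d
      using quasidiff_dir_deriv_le_supp[OF qd_g, of j "z j" d] hz that Jx unfolding Pg_def by auto
    show "usc_at (g j) xb \<and> g j xb < 0" if "j \<in> {1..l} - Jx" for j
      using h3a gxb that by (force simp: Jx_def)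
    show "dir_deriv f0 xb d \<le> supp ((\<lambda>a. a + y0) ` L0) d" for d
      by (rule quasidiff_dir_deriv_le_supp[OF h1(1) hy0])
    show "convex ((\<lambda>a. a + y0) ` L0) \<and> (\<lambda>a. a + y0) ` L0 \<noteq> {} \<and> compactin weak_star ((\<lambda>a. a + y0) ` L0)"
      by (rule translation[OF h1(1)])
    show "\<exists>v0. (\<forall>j\<in>Jx. supp (Pg j) v0 < 0) \<and> (\<forall>i\<in>{1..m}. supp (Cp i) v0 \<le> 0 \<and> supp (Cm i) v0 \<le> 0)"
      using c3 unfolding Cp_def Cm_def Pg_def by blast
  qed (use opt h1 in \<open>auto simp: quasidiff_def\<close>)
  obtain lam p0 p c where p: "p0 \<in> (\<lambda>a. a + y0) ` L0" "\<forall>j\<in>Jx. lam j \<ge> 0 \<and> p j \<in> Pg j"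
    and c: "c \<in> wstar_closure constraint_cone" and zero: "p0 + (\<Sum>j\<in>Jx. lam j *\<^sub>R p j) + c = 0"
    by (rule multiplier_rule)
  have "\<forall>j\<in>{1..l}. Lg j \<noteq> {}"
    using qd_g by (simp add: quasidiff_def)
  from multipliers_normal_form[OF Jx this p[unfolded Pg_def] zero]
  obtain lam' where lam': "\<forall>j\<in>{1..l}. lam' j \<ge> 0 \<and> (j \<notin> Jx \<longrightarrow> lam' j = 0)"
    and "\<exists>a\<in>L0. \<exists>b. (\<forall>j\<in>{1..l}. b j \<in> Lg j) \<and> 0 = a + y0 + (\<Sum>j\<in>{1..l}. lam' j *\<^sub>R (b j + z j)) + c"
    by blast
  moreover have "lam' j * g j xb = 0" if "j \<in> {1..l}" for j
    using lam' that by (cases "j \<in> Jx") (auto simp: Jx_def)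
  ultimately show ?thesis
    using lam' c unfolding constraint_cone_def Cp_def Cm_def by blast
qed

end
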